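(* Under the standing assumptions below, let $F_0(\gamma,x,s)=(1+\sum_{i=1}^I\gamma^i)L$. Then there exists $F^*\in\mathcal N$ with $\|\mathcal B^{(n)}(F_0)-F^*\|_{\mathcal M}\to0$ as $n\to\infty$ (where $\mathcal B^{(n)}$ is the $n$-fold iterate), and $F^*$ is the largest fixed point of $\mathcal B$ in $\mathcal N$: $\mathcal B(F^* )=F^*$, and every $F\in\mathcal N$ with $\mathcal B(F)=F$ satisfies $F\le F^*$ pointwise.
   Context: Setup. Let $\mathcal S$ be a finite set and $(s_t)_{t\ge0}$ a Markov chain on $\mathcal S$ with transition probabilities $\pi(s'|s)>0$ for all $s,s'\in\mathcal S$; $\mathbb E_{s_t}$ denotes expectation over future shocks conditional on the history $s^t=(s_0,\dots,s_t)$. Let $\mathcal A\subset\mathbb R^n$ be a finite set, $\mathcal X\subseteq\mathbb R^m$ a countable set, $\zeta:\mathcal X\times\mathcal A\times\mathcal S\to\mathcal X$, $p:\mathcal X\times\mathcal A\times\mathcal S\to\mathbb R$, $r,g^1,\dots,g^I:\mathcal X\times\mathcal A\times\mathcal S\to\mathbb R$ bounded functions, $\bar g^1,\dots,\bar g^I\in\mathbb R$ and $\beta\in(0,1)$. A plan is a family $a=(a(s^t))_{t\ge0,\,s^t\in\mathcal S^{t+1}}$ with $a(s^t)\in\mathcal A$; given $x_0$ it induces states $x(s^0)=x_0$, $x(s^{t+1})=\zeta(x(s^t),a(s^t),s_t)$. Let $\tilde{\mathcal A}(x,s)=\{a\in\mathcal A:p(x,a,s)\ge0\}$ and $\tilde{\mathcal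 A}^\infty(x_0)$ the set of plans with $a(s^t)\in\tilde{\mathcal A}(x(s^t),s_t)$ for all $t,s^t$. A plan is feasible for $(x_0,s_0)$ if it lies in $\tilde{\mathcal A}^\infty(x_0)$ and $\mathbb E_{s_t}\sum_{n\ge0}\beta^ng^i(x(s^{t+n}),a(s^{t+n}),s_{t+n})\ge\bar g^i$ for all $t,s^t,i$. Standing assumption: for every $(x_0,s_0)$ a feasible plan exists. Function spaces. Let $L=(\|r\|_\infty+\sum_{i=1}^I\|g^i\|_\infty)/(1-\beta)$, $B(k)=\{\gamma\in\mathbb R^I_+:\|\gamma\|_\infty\le k\}$, and enumerate $\mathcal S=\{s_1,\dots,s_{|\mathcal S|}\}$, $\mathcal X=\{x_1,x_2,\dots\}$. $\mathcal M$ is the set of $F:\mathbb R^I_+\times\mathcal X\times\mathcal S\to\mathbb R$ with $F(\cdot,x,s)\in L^\infty(B(k))$ for all $k\in\mathbb N_+$, $x,s$, and $\|F\|_{\mathcal M}:=\sum_{i}2^{-i}\sum_j2^{-j}\sum_{k\ge1}2^{-k}\|F(\cdot,x_j,s_i)\|_{L^\infty(B(k))}<\infty$. $\mathcal N\subset\mathcal M$ is the set of $F\in\mathcal M$ such that for all $x,s$: (i) $F(\cdot,x,s)$ is convex; (ii) $|F(\gamma_1,x,s)-F(\gamma_2,x,s)|\le L\|\gamma_1-\gamma_2\|_1$; (iii) $F(\gamma,x,s)\ge v^0+\sum_i\gamma^iv^i$ for every feasible plan for $(x,s)$, where $v^0=\mathbb E_{s}\sum_t\beta^tr(x(s^t),a(s^t),s_t)$,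 $v^i=\mathbb E_s\sum_t\beta^tg^i(x(s^t),a(s^t),s_t)$ (with $x_0=x,s_0=s$); (iv) $F(\gamma,x,s)\le(1+\sum_i\gamma^i)L$. Bellman operator: for $F:\mathbb R^I_+\times\mathcal X\times\mathcal S\to\mathbb R$, $\mathcal B(F)(\gamma,x,s)=\inf_{\lambda\in\mathbb R^I_+}\sup_{a\in\tilde{\mathcal A}(x,s)}\big[r(x,a,s)+\sum_i(\gamma^ig^i(x,a,s)+\lambda^i(g^i(x,a,s)-\bar g^i))+\beta\mathbb E_sF(\gamma+\lambda,\zeta(x,a,s),s')\big]$, where $\mathbb E_s$ is expectation over $s'\sim\pi(\cdot|s)$. *)

theory Defs
  imports "HOL-Analysis.Analysis" "HOL-Probability.Essential_Supremum"
begin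

definition nonneg_orth :: "(real^'i) set" where
  "nonneg_orth = {\<gamma>. \<forall>i. 0 \<le> \<gamma>$i}"

definition boxB :: "nat \<Rightarrow> (real^'i) set" where
  "boxB k = {\<gamma>. \<forall>i. 0 \<le> \<gamma>$i \<and> \<gamma>$i \<le> real k}"

definition Linf_norm :: "nat \<Rightarrow> (real^'i \<Rightarrow> real) \<Rightarrow> ereal" where
  "Linf_norm k f = esssup (lebesgue_on (boxB k)) (\<lambda>\<gamma>. ereal \<bar>f \<gamma>\<bar>)"

definition in_Linf :: "nat \<Rightarrow> (real^'i \<Rightarrow> real) \<Rightarrow> bool" where
  "in_Linf k f \<longleftrightarrow> f \<in> borel_measurable (lebesgue_on (boxB k)) \<and> Linf_norm k f < \<infinity>"

text \<open>The norm of M. States are enumerated by se on {1..|S|}; the countable set X is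
  enumerated by xe on an index set Jx (either {1..} or {1..k}).\<close>
definition normM :: "(nat \<Rightarrow> 's::finite) \<Rightarrow> (nat \<Rightarrow> 'x) \<Rightarrow> nat set
     \<Rightarrow> (real^'i \<Rightarrow> 'x \<Rightarrow> 's \<Rightarrow> real) \<Rightarrow> ennreal" where
  "normM se xe Jx F =
     (\<Sum>i\<in>{1..CARD('s)}. ennreal ((1/2)^i) *
        (\<Sum>j. if j \<in> Jx then ennreal ((1/2)^j) *
               (\<Sum>k. ennreal ((1/2)^(Suc k)) *
                     e2ennreal (Linf_norm (Suc k) (\<lambda>\<gamma>. F \<gamma> (xe j) (se i))))
             else 0))"

definition in_M :: "(nat \<Rightarrow> 's::finite) \<Rightarrow> (nat \<Rightarrow> 'x) \<Rightarrow> nat set \<Rightarrow> 'x set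
     \<Rightarrow> (real^'i \<Rightarrow> 'x \<Rightarrow> 's \<Rightarrow> real) \<Rightarrow> bool" where
  "in_M se xe Jx Xset F \<longleftrightarrow>
     (\<forall>x\<in>Xset. \<forall>s. \<forall>k\<ge>1. in_Linf k (\<lambda>\<gamma>. F \<gamma> x s)) \<and> normM se xe Jx F < \<infinity>"

text \<open>A history s^t = (s_0,...,s_t) is a nonempty list. trajr works on the reversed history.\<close>
fun trajr :: "('x \<Rightarrow> 'a \<Rightarrow> 's \<Rightarrow> 'x) \<Rightarrow> ('s list \<Rightarrow> 'a) \<Rightarrow> 'x \<Rightarrow> 's list \<Rightarrow> 'x" where
  "trajr \<zeta> a x0 [] = x0"
| "trajr \<zeta> a x0 [s] = x0"
| "trajr \<zeta> a x0 (s # s' # r) = \<zeta> (trajr \<zeta> a x0 (s' # r)) (a (rev (s' # r))) s'"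

text \<open>x(s^t) induced by plan a from x0: x(s^0)=x0, x(s^{t+1}) = zeta(x(s^t),a(s^t),s_t).\<close>
definition traj :: "('x \<Rightarrow> 'a \<Rightarrow> 's \<Rightarrow> 'x) \<Rightarrow> ('s list \<Rightarrow> 'a) \<Rightarrow> 'x \<Rightarrow> 's list \<Rightarrow> 'x" where
  "traj \<zeta> a x0 h = trajr \<zeta> a x0 (rev h)"

text \<open>P s s' is the transition probability pi(s'|s).\<close>
fun pathprob :: "('s \<Rightarrow> 's \<Rightarrow> real) \<Rightarrow> 's \<Rightarrow> 's list \<Rightarrow> real" where
  "pathprob P s [] = 1"
| "pathprob P s (s' # e) = P s s' * pathprob P s' e"

definition cexp :: "('s::finite \<Rightarrow> 's \<Rightarrow> real) \<Rightarrow> 's list \<Rightarrow> nat \<Rightarrow> ('s list \<Rightarrow> real) \<Rightarrow> real" where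
  "cexp P h n f = (\<Sum>e\<in>{e. length e = n}. pathprob P (last h) e * f (h @ e))"

definition contval :: "('s::finite \<Rightarrow> 's \<Rightarrow> real) \<Rightarrow> real \<Rightarrow> ('x \<Rightarrow> 'a \<Rightarrow> 's \<Rightarrow> 'x) \<Rightarrow> 'x
     \<Rightarrow> ('s list \<Rightarrow> 'a) \<Rightarrow> ('x \<Rightarrow> 'a \<Rightarrow> 's \<Rightarrow> real) \<Rightarrow> 's list \<Rightarrow> real" where
  "contval P \<beta> \<zeta> x0 a u h =
     (\<Sum>n. \<beta>^n * cexp P h n (\<lambda>h'. u (traj \<zeta> a x0 h') (a h') (last h')))"

definition admissible :: "'a set \<Rightarrow> ('x \<Rightarrow> 'a \<Rightarrow> 's \<Rightarrow> real) \<Rightarrow> ('x \<Rightarrow> 'a \<Rightarrow> 's \<Rightarrow> 'x)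
     \<Rightarrow> 'x \<Rightarrow> 's \<Rightarrow> ('s list \<Rightarrow> 'a) \<Rightarrow> bool" where
  "admissible Aset p \<zeta> x0 s0 a \<longleftrightarrow>
     (\<forall>h. h \<noteq> [] \<and> hd h = s0 \<longrightarrow> a h \<in> Aset \<and> 0 \<le> p (traj \<zeta> a x0 h) (a h) (last h))"

definition feasible :: "('s::finite \<Rightarrow> 's \<Rightarrow> real) \<Rightarrow> real \<Rightarrow> ('x \<Rightarrow> 'a \<Rightarrow> 's \<Rightarrow> 'x) \<Rightarrow> 'a set
     \<Rightarrow> ('x \<Rightarrow> 'a \<Rightarrow> 's \<Rightarrow> real) \<Rightarrow> ('i \<Rightarrow> 'x \<Rightarrow> 'a \<Rightarrow> 's \<Rightarrow> real) \<Rightarrow> ('i \<Rightarrow> real)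
     \<Rightarrow> 'x \<Rightarrow> 's \<Rightarrow> ('s list \<Rightarrow> 'a) \<Rightarrow> bool" where
  "feasible P \<beta> \<zeta> Aset p g gbar x0 s0 a \<longleftrightarrow>
     admissible Aset p \<zeta> x0 s0 a \<and>
     (\<forall>h i. h \<noteq> [] \<and> hd h = s0 \<longrightarrow> gbar i \<le> contval P \<beta> \<zeta> x0 a (g i) h)"

definition Lconst :: "'x set \<Rightarrow> 'a set \<Rightarrow> real \<Rightarrow> ('x \<Rightarrow> 'a \<Rightarrow> 's::finite \<Rightarrow> real)
     \<Rightarrow> ('i::finite \<Rightarrow> 'x \<Rightarrow> 'a \<Rightarrow> 's \<Rightarrow> real) \<Rightarrow> real" where
  "Lconst Xset Aset \<beta> r g =
     ((SUP (x,a,s)\<in>Xset \<times> Aset \<times> UNIV. \<bar>r x a s\<bar>)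
      + (\<Sum>i\<in>UNIV. SUP (x,a,s)\<in>Xset \<times> Aset \<times> UNIV. \<bar>g i x a s\<bar>)) / (1 - \<beta>)"

definition bellman :: "('s::finite \<Rightarrow> 's \<Rightarrow> real) \<Rightarrow> real \<Rightarrow> ('x \<Rightarrow> 'a \<Rightarrow> 's \<Rightarrow> 'x) \<Rightarrow> 'a set
     \<Rightarrow> ('x \<Rightarrow> 'a \<Rightarrow> 's \<Rightarrow> real) \<Rightarrow> ('x \<Rightarrow> 'a \<Rightarrow> 's \<Rightarrow> real)
     \<Rightarrow> ('i::finite \<Rightarrow> 'x \<Rightarrow> 'a \<Rightarrow> 's \<Rightarrow> real) \<Rightarrow> ('i \<Rightarrow> real)
     \<Rightarrow> (real^'i \<Rightarrow> 'x \<Rightarrow> 's \<Rightarrow> real) \<Rightarrow> (real^'i \<Rightarrow> 'x \<Rightarrow> 's \<Rightarrow> real)" where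
  "bellman P \<beta> \<zeta> Aset p r g gbar F \<gamma> x s =
     (INF lam\<in>nonneg_orth.
        Sup ((\<lambda>a. r x a s
                  + (\<Sum>i\<in>UNIV. \<gamma>$i * g i x a s + lam$i * (g i x a s - gbar i))
                  + \<beta> * (\<Sum>s'\<in>UNIV. P s s' * F (\<gamma> + lam) (\<zeta> x a s) s'))
             ` {a \<in> Aset. 0 \<le> p x a s}))"

definition in_N :: "(nat \<Rightarrow> 's::finite) \<Rightarrow> (nat \<Rightarrow> 'x) \<Rightarrow> nat set \<Rightarrow> 'x set
     \<Rightarrow> ('s \<Rightarrow> 's \<Rightarrow> real) \<Rightarrow> real \<Rightarrow> ('x \<Rightarrow> 'a \<Rightarrow> 's \<Rightarrow> 'x) \<Rightarrow> 'a set
     \<Rightarrow> ('x \<Rightarrow> 'a \<Rightarrow> 's \<Rightarrow> real) \<Rightarrow> ('x \<Rightarrow> 'a \<Rightarrow> 's \<Rightarrow> real)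
     \<Rightarrow> ('i::finite \<Rightarrow> 'x \<Rightarrow> 'a \<Rightarrow> 's \<Rightarrow> real) \<Rightarrow> ('i \<Rightarrow> real)
     \<Rightarrow> (real^'i \<Rightarrow> 'x \<Rightarrow> 's \<Rightarrow> real) \<Rightarrow> bool" where
  "in_N se xe Jx Xset P \<beta> \<zeta> Aset p r g gbar F \<longleftrightarrow>
     in_M se xe Jx Xset F \<and>
     (\<forall>x\<in>Xset. \<forall>s.
        convex_on nonneg_orth (\<lambda>\<gamma>. F \<gamma> x s) \<and>
        (\<forall>\<gamma>1\<in>nonneg_orth. \<forall>\<gamma>2\<in>nonneg_orth.
           \<bar>F \<gamma>1 x s - F \<gamma>2 x s\<bar> \<le> Lconst Xset Aset \<beta> r g * (\<Sum>i\<in>UNIV. \<bar>\<gamma>1$i - \<gamma>2$i\<bar>)) \<and>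
        (\<forall>a. feasible P \<beta> \<zeta> Aset p g gbar x s a \<longrightarrow>
           (\<forall>\<gamma>\<in>nonneg_orth.
              contval P \<beta> \<zeta> x a r [s] + (\<Sum>i\<in>UNIV. \<gamma>$i * contval P \<beta> \<zeta> x a (g i) [s])
              \<le> F \<gamma> x s)) \<and>
        (\<forall>\<gamma>\<in>nonneg_orth. F \<gamma> x s \<le> (1 + (\<Sum>i\<in>UNIV. \<gamma>$i)) * Lconst Xset Aset \<beta> r g))"

end

theory Submission
  imports Defs
begin

text \<open>
  The Bellman operator B maps the functions satisfying conditions (i)--(iv) of N into
  themselves. The lower bound (iii) is Lagrangian weak duality in the first period: a feasible
  plan satisfies its constraints, so multipliers \<mu> \<ge> 0 only add nonnegative slack, and its
  continuation plan is again feasible. The upper bound (iv) and the Lipschitz bound (ii) hold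
  because every period payoff is bounded by (1 - \<beta>) L, and convexity (i) survives because
  B F is the partial infimum over \<mu> of a jointly convex function of (\<gamma>, \<mu>).

  As B is monotone and F_0 is the largest function satisfying (iv), the iterates
  B^n F_0 decrease; by (iii) they are bounded below, so they converge pointwise to a
  function F* which again satisfies (i)--(iv). Since the maximum over the finite action set
  commutes with limits, F* is a fixed point, and a fixed point F \<le> F_0 stays below every
  iterate, hence below F*. Finally the iterates are equi-Lipschitz, so the convergence is
  uniform on the compact boxes B(k): every L-infinity norm in the norm of M tends to 0, and
  Tannery's theorem passes to the limit in the weighted sums.
\<close>

section \<open>Discounted values along histories\<close>

definition stochastic_matrix :: "('s::finite \<Rightarrow> 's \<Rightarrow> real) \<Rightarrow> bool" where
  "stochastic_matrix P \<longleftrightarrow> (\<forall>s s'. 0 \<le> P s s') \<and> (\<forall>s. (\<Sum>s'\<in>UNIV. P s s') = 1)"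

lemma lists_length_Suc_eq_image_Cons:
  "{e::'s list. length e = Suc n} = (\<lambda>(s', e'). s' # e') ` (UNIV \<times> {e. length e = n})"
  by (auto simp: length_Suc_conv image_iff)

lemma cexp_0 [simp]: "cexp P h 0 f = f h"
  by (simp add: cexp_def)

lemma cexp_Suc: "cexp P h (Suc n) f = (\<Sum>s'\<in>UNIV. P (last h) s' * cexp P (h @ [s']) n f)"
proof -
  have inj: "inj_on (\<lambda>(s', e'). s' # e') (UNIV \<times> {e::'a list. length e = n})"
    by (auto simp: inj_on_def)
  have "cexp P h (Suc n) f
      = (\<Sum>(s', e')\<in>UNIV \<times> {e. length e = n}. pathprob P (last h) (s' # e') * f (h @ s' # e'))"
    unfolding cexp_def lists_length_Suc_eq_image_Cons
    by (subst sum.reindex[OF inj]) (simp add: case_prod_beta)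
  also have "\<dots> = (\<Sum>s'\<in>UNIV. \<Sum>e'\<in>{e. length e = n}.
                    P (last h) s' * (pathprob P s' e' * f ((h @ [s']) @ e')))"
    by (subst sum.cartesian_product[symmetric]) (simp add: mult.assoc)
  also have "\<dots> = (\<Sum>s'\<in>UNIV. P (last h) s' * cexp P (h @ [s']) n f)"
    by (simp add: cexp_def sum_distrib_left)
  finally show ?thesis .
qed

lemma pathprob_nonneg: "stochastic_matrix P \<Longrightarrow> 0 \<le> pathprob P s e"
  by (induction e arbitrary: s) (auto simp: stochastic_matrix_def)

lemma cexp_const_1: "stochastic_matrix P \<Longrightarrow> cexp P h n (\<lambda>_. 1) = 1"
  by (induction n arbitrary: h) (simp_all add: cexp_Suc stochastic_matrix_def)

lemma cexp_abs_le:
  assumes P: "stochastic_matrix P" and f: "\<And>e. \<bar>f (h @ e)\<bar> \<le> M"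
  shows "\<bar>cexp P h n f\<bar> \<le> M"
proof -
  have "\<bar>cexp P h n f\<bar> \<le> (\<Sum>e\<in>{e. length e = n}. pathprob P (last h) e * M)"
    unfolding cexp_def
    by (rule order_trans[OF sum_abs sum_mono])
       (simp add: abs_mult pathprob_nonneg[OF P] mult_left_mono f)
  also have "\<dots> = M * cexp P h n (\<lambda>_. 1)"
    by (simp add: cexp_def sum_distrib_left mult.commute)
  finally show ?thesis by (simp add: cexp_const_1[OF P])
qed

definition discounted_value ::
    "('s::finite \<Rightarrow> 's \<Rightarrow> real) \<Rightarrow> real \<Rightarrow> 's list \<Rightarrow> ('s list \<Rightarrow> real) \<Rightarrow> real" where
  "discounted_value P \<beta> h f = (\<Sum>n. \<beta>^n * cexp P h n f)"

lemma contval_eq_discounted_value: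
  "contval P \<beta> \<zeta> x0 a u h = discounted_value P \<beta> h (\<lambda>h'. u (traj \<zeta> a x0 h') (a h') (last h'))"
  by (simp add: contval_def discounted_value_def)

lemma discounted_term_abs_le:
  assumes "stochastic_matrix P" "\<And>e. \<bar>f (h @ e)\<bar> \<le> M" "0 \<le> \<beta>"
  shows "\<bar>\<beta>^n * cexp P h n f\<bar> \<le> M * \<beta>^n"
  using mult_right_mono[OF cexp_abs_le[where f=f and h=h and M=M, OF assms(1,2)]
      zero_le_power[OF assms(3)]] assms(3)
  by (simp add: abs_mult mult.commute)

lemma summable_discounted:
  assumes "stochastic_matrix P" "\<And>e. \<bar>f (h @ e)\<bar> \<le> M" "0 \<le> \<beta>" "\<beta> < 1"
  shows "summable (\<lambda>n. \<beta>^n * cexp P h n f)"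
proof (rule summable_comparison_test')
  show "summable (\<lambda>n. M * \<beta>^n)"
    using assms(3,4) by (intro summable_mult summable_geometric) simp
qed (simp add: discounted_term_abs_le[where P=P and f=f and h=h and M=M and \<beta>=\<beta>, OF assms(1-3)])

lemma discounted_value_abs_le:
  assumes "stochastic_matrix P" "\<And>e. \<bar>f (h @ e)\<bar> \<le> M" "0 \<le> \<beta>" "\<beta> < 1"
  shows "\<bar>discounted_value P \<beta> h f\<bar> \<le> M / (1 - \<beta>)"
proof -
  have "\<bar>discounted_value P \<beta> h f\<bar> \<le> (\<Sum>n. M * \<beta>^n)"
    unfolding discounted_value_def
  proof (rule norm_suminf_le[where 'a=real, unfolded real_norm_def])
    show "summable (\<lambda>n. M * \<beta>^n)"
      using assms(3,4) by (intro summable_mult summable_geometric) simp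
  qed (rule discounted_term_abs_le[where P=P and f=f and h=h and M=M and \<beta>=\<beta>, OF assms(1-3)])
  also have "\<dots> = M / (1 - \<beta>)"
    using assms(3,4) by (simp add: suminf_mult suminf_geometric)
  finally show ?thesis .
qed

lemma discounted_value_unfold:
  assumes "stochastic_matrix P" "\<And>e. \<bar>f (h @ e)\<bar> \<le> M" "0 \<le> \<beta>" "\<beta> < 1"
  shows "discounted_value P \<beta> h f
    = f h + \<beta> * (\<Sum>s'\<in>UNIV. P (last h) s' * discounted_value P \<beta> (h @ [s']) f)"
proof -
  have summable: "summable (\<lambda>n. \<beta>^n * cexp P (h @ e) n f)" for e
    by (rule summable_discounted[OF assms(1) _ assms(3,4)]) (use assms(2) in simp)
  have "discounted_value P \<beta> h f = f h + (\<Sum>n. \<beta>^(Suc n) * cexp P h (Suc n) f)"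
    unfolding discounted_value_def using suminf_split_head[OF summable[of "[]"]] by simp
  also have "(\<Sum>n. \<beta>^(Suc n) * cexp P h (Suc n) f)
      = (\<Sum>n. \<Sum>s'\<in>UNIV. \<beta> * (P (last h) s' * (\<beta>^n * cexp P (h @ [s']) n f)))"
    by (simp add: cexp_Suc sum_distrib_left mult_ac)
  also have "\<dots> = (\<Sum>s'\<in>UNIV. \<Sum>n. \<beta> * (P (last h) s' * (\<beta>^n * cexp P (h @ [s']) n f)))"
    by (intro suminf_sum summable_mult summable)
  also have "\<dots> = (\<Sum>s'\<in>UNIV. \<beta> * (P (last h) s' * discounted_value P \<beta> (h @ [s']) f))"
    unfolding discounted_value_def by (simp add: suminf_mult summable summable_mult)
  finally show ?thesis by (simp add: sum_distrib_left)
qed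

section \<open>Trajectories of plans\<close>

lemma trajr_Cons_plan:
  "l \<noteq> [] \<Longrightarrow> trajr \<zeta> (\<lambda>h. a (s # h)) (\<zeta> x0 (a [s]) s) l = trajr \<zeta> a x0 (l @ [s])"
  by (induction l rule: induct_list012) auto

lemma traj_Cons_plan:
  "h \<noteq> [] \<Longrightarrow> traj \<zeta> (\<lambda>h. a (s # h)) (\<zeta> x0 (a [s]) s) h = traj \<zeta> a x0 (s # h)"
  unfolding traj_def by (simp add: trajr_Cons_plan)

lemma contval_Cons_plan:
  assumes "h \<noteq> []"
  shows "contval P \<beta> \<zeta> (\<zeta> x0 (a [s]) s) (\<lambda>h. a (s # h)) u h = contval P \<beta> \<zeta> x0 a u (s # h)"
proof -
  have "cexp P h n (\<lambda>h'. u (traj \<zeta> (\<lambda>h. a (s # h)) (\<zeta> x0 (a [s]) s) h') (a (s # h')) (last h'))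
      = cexp P (s # h) n (\<lambda>h'. u (traj \<zeta> a x0 h') (a h') (last h'))" for n
    unfolding cexp_def using assms by (intro sum.cong) (auto simp: traj_Cons_plan)
  then show ?thesis unfolding contval_def by simp
qed

lemma traj_in_invariant_set:
  assumes \<zeta>_X: "\<And>x a s. x \<in> X \<Longrightarrow> a \<in> A \<Longrightarrow> \<zeta> x a s \<in> X"
    and a: "\<And>h. h \<noteq> [] \<Longrightarrow> hd h = s0 \<Longrightarrow> a h \<in> A" and x0: "x0 \<in> X"
    and h: "h \<noteq> []" "hd h = s0"
  shows "traj \<zeta> a x0 h \<in> X"
proof -
  have "trajr \<zeta> a x0 l \<in> X" if "l \<noteq> []" "last l = s0" for l
    using that
  proof (induction l rule: induct_list012)
    case (3 x y zs)
    have "a (rev (y # zs)) \<in> A" using 3 by (intro a) (auto simp: hd_rev)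
    with 3 show ?case by (auto intro: \<zeta>_X)
  qed (use x0 in auto)
  with h show ?thesis unfolding traj_def by (simp add: last_rev)
qed

section \<open>Partial infima of convex functions; equi-Lipschitz sequences\<close>

lemma le_convex_comb_cINF:
  fixes f g :: "'b \<Rightarrow> real"
  assumes "A \<noteq> {}" "B \<noteq> {}" "bdd_below (f ` A)" "bdd_below (g ` B)"
    and u: "0 \<le> u" and v: "0 \<le> v" and uv: "u + v = 1"
    and le: "\<And>a b. a \<in> A \<Longrightarrow> b \<in> B \<Longrightarrow> c \<le> u * f a + v * g b"
  shows "c \<le> u * (INF a\<in>A. f a) + v * (INF b\<in>B. g b)"
proof (rule field_le_epsilon)
  fix e :: real assume "0 < e"
  then obtain a b where a: "a \<in> A" "f a < (INF a\<in>A. f a) + e" and b: "b \<in> B" "g b < (INF b\<in>B. g b) + e"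
    using cINF_less_iff[OF assms(1,3)] cINF_less_iff[OF assms(2,4)] by (meson less_add_same_cancel1)
  have "c \<le> u * f a + v * g b" using le a b by blast
  also have "\<dots> \<le> u * ((INF a\<in>A. f a) + e) + v * ((INF b\<in>B. g b) + e)"
    using a b u v by (intro add_mono mult_left_mono) auto
  also have "\<dots> = u * (INF a\<in>A. f a) + v * (INF b\<in>B. g b) + (u + v) * e"
    by (simp add: algebra_simps)
  finally show "c \<le> u * (INF a\<in>A. f a) + v * (INF b\<in>B. g b) + e" by (simp add: uv)
qed

lemma convex_on_partial_cINF:
  fixes h :: "'a::real_vector \<Rightarrow> 'b::real_vector \<Rightarrow> real"
  assumes C: "convex C" "C \<noteq> {}"
    and bdd: "\<And>x. x \<in> S \<Longrightarrow> bdd_below (h x ` C)"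
    and joint: "convex_on (S \<times> C) (\<lambda>(x, y). h x y)"
  shows "convex_on S (\<lambda>x. INF y\<in>C. h x y)"
  unfolding convex_on_def
proof (intro conjI ballI allI impI)
  show S: "convex S"
    using convex_linear_image[OF linear_fst, of "S \<times> C"] joint C(2) by (simp add: convex_on_def)
  fix x1 x2 and u v :: real
  assume x: "x1 \<in> S" "x2 \<in> S" and u: "0 \<le> u" and v: "0 \<le> v" and uv: "u + v = 1"
  have x12: "u *\<^sub>R x1 + v *\<^sub>R x2 \<in> S" using convexD[OF S x u v uv] .
  show "(INF y\<in>C. h (u *\<^sub>R x1 + v *\<^sub>R x2) y) \<le> u * (INF y\<in>C. h x1 y) + v * (INF y\<in>C. h x2 y)"
  proof (rule le_convex_comb_cINF[OF C(2) C(2) bdd bdd u v uv])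
    fix y1 y2 assume y: "y1 \<in> C" "y2 \<in> C"
    have y12: "u *\<^sub>R y1 + v *\<^sub>R y2 \<in> C" using convexD[OF C(1) y u v uv] .
    have "(INF y\<in>C. h (u *\<^sub>R x1 + v *\<^sub>R x2) y) \<le> h (u *\<^sub>R x1 + v *\<^sub>R x2) (u *\<^sub>R y1 + v *\<^sub>R y2)"
      by (rule cINF_lower[OF bdd[OF x12] y12])
    also have "\<dots> \<le> u * h x1 y1 + v * h x2 y2"
    proof -
      have "(x1, y1) \<in> S \<times> C" "(x2, y2) \<in> S \<times> C" using x y by auto
      then have "(\<lambda>(x, y). h x y) (u *\<^sub>R (x1, y1) + v *\<^sub>R (x2, y2))
          \<le> u * (\<lambda>(x, y). h x y) (x1, y1) + v * (\<lambda>(x, y). h x y) (x2, y2)"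
        using joint u v uv unfolding convex_on_def by blast
      then show ?thesis by simp
    qed
    finally show "(INF y\<in>C. h (u *\<^sub>R x1 + v *\<^sub>R x2) y) \<le> u * h x1 y1 + v * h x2 y2" .
  qed (use x in auto)
qed

lemma uniform_limit_equi_lipschitz_compact:
  fixes f :: "nat \<Rightarrow> 'a::metric_space \<Rightarrow> 'b::metric_space"
  assumes K: "compact K"
    and lip: "\<And>n. C-lipschitz_on K (f n)" "C-lipschitz_on K l"
    and lim: "\<And>x. x \<in> K \<Longrightarrow> (\<lambda>n. f n x) \<longlonglongrightarrow> l x"
  shows "uniform_limit K f l sequentially"
proof (rule uniform_limitI)
  fix e :: real assume e: "0 < e"
  have C: "0 \<le> C" using lipschitz_on_nonneg[OF lip(2)] .
  define d where "d = e / (4 * (C + 1))"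
  have d: "0 < d" "2 * (C * d) < e / 2"
    using e C by (auto simp: d_def field_simps)
  obtain T where T: "T \<subseteq> K" "finite T" "K \<subseteq> (\<Union>q\<in>T. ball q d)"
    by (rule compactE_image[OF K, of K "\<lambda>q. ball q d"]) (use d in auto)
  have "\<forall>\<^sub>F n in sequentially. \<forall>q\<in>T. dist (f n q) (l q) < e / 2"
    using T(1,2) e by (intro eventually_ball_finite ballI tendstoD[OF lim]) auto
  then show "\<forall>\<^sub>F n in sequentially. \<forall>x\<in>K. dist (f n x) (l x) < e"
  proof (rule eventually_mono, intro ballI)
    fix n x assume near: "\<forall>q\<in>T. dist (f n q) (l q) < e / 2" and x: "x \<in> K"
    obtain q where q: "q \<in> T" "dist q x < d" using T(3) x by auto
    have "dist (f n x) (l x) \<le> dist (f n x) (f n q) + dist (f n q) (l q) + dist (l q) (l x)"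
      using dist_triangle[of "f n x" "l x" "f n q"] dist_triangle[of "f n q" "l x" "l q"] by linarith
    also have "\<dots> \<le> C * dist x q + dist (f n q) (l q) + C * dist q x"
      using q(1) T(1) x by (intro add_mono lipschitz_onD[OF lip(1)] lipschitz_onD[OF lip(2)]) auto
    also have "\<dots> < e"
      using near q(1) d(2) mult_left_mono[OF less_imp_le[OF q(2)] C] by (auto simp: dist_commute)
    finally show "dist (f n x) (l x) < e" .
  qed
qed

section \<open>The orthant and the boxes B(k)\<close>

lemma zero_in_nonneg_orth: "0 \<in> nonneg_orth"
  by (simp add: nonneg_orth_def)

lemma nonneg_orth_add: "a \<in> nonneg_orth \<Longrightarrow> b \<in> nonneg_orth \<Longrightarrow> a + b \<in> nonneg_orth"
  by (simp add: nonneg_orth_def)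

lemma convex_nonneg_orth: "convex nonneg_orth"
  unfolding nonneg_orth_def convex_def by auto

lemma boxB_eq_cbox: "boxB k = cbox (0::real^'i) (\<chi> i. real k)"
  by (auto simp: boxB_def mem_box_cart)

lemma compact_boxB: "compact (boxB k :: (real^'i) set)"
  unfolding boxB_eq_cbox by simp

lemma boxB_in_sets_lebesgue: "(boxB k :: (real^'i) set) \<in> sets lebesgue"
  unfolding boxB_eq_cbox by (simp add: fmeasurableD)

lemma boxB_subset_nonneg_orth: "boxB k \<subseteq> nonneg_orth"
  by (auto simp: boxB_def nonneg_orth_def)

lemma sum_le_of_mem_boxB: "\<gamma> \<in> boxB k \<Longrightarrow> (\<Sum>i\<in>UNIV. \<gamma>$i) \<le> real CARD('i) * real k"
  for \<gamma> :: "real^'i"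
  using sum_bounded_above[of UNIV "\<lambda>i. \<gamma>$i" "real k"] by (auto simp: boxB_def)

lemma sum_abs_diff_le_card_dist: "(\<Sum>i\<in>UNIV. \<bar>a$i - b$i\<bar>) \<le> real CARD('i) * dist a b"
  for a b :: "real^'i"
proof -
  have "\<bar>a$i - b$i\<bar> \<le> dist a b" for i
    using component_le_norm_cart[of "a - b" i] by (simp add: dist_norm)
  then show ?thesis using sum_bounded_above[of UNIV "\<lambda>i. \<bar>a$i - b$i\<bar>" "dist a b"] by simp
qed

section \<open>L-infinity norms and the norm of M\<close>

lemma Linf_norm_le:
  fixes f :: "real^'i \<Rightarrow> real"
  assumes "f \<in> borel_measurable (lebesgue_on (boxB k))" "\<And>\<gamma>. \<gamma> \<in> boxB k \<Longrightarrow> \<bar>f \<gamma>\<bar> \<le> c"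
  shows "Linf_norm k f \<le> ereal c"
  unfolding Linf_norm_def
proof (rule esssup_I)
  show "(\<lambda>\<gamma>. ereal \<bar>f \<gamma>\<bar>) \<in> borel_measurable (lebesgue_on (boxB k))"
    using assms(1) by measurable
  show "AE \<gamma> in lebesgue_on (boxB k). ereal \<bar>f \<gamma>\<bar> \<le> ereal c"
    by (rule AE_I2) (use assms(2) boxB_in_sets_lebesgue in auto)
qed

lemma in_Linf_if_bounded:
  fixes f :: "real^'i \<Rightarrow> real"
  assumes "f \<in> borel_measurable (lebesgue_on (boxB k))" "\<And>\<gamma>. \<gamma> \<in> boxB k \<Longrightarrow> \<bar>f \<gamma>\<bar> \<le> c"
  shows "in_Linf k f"
  using Linf_norm_le[OF assms] assms(1) unfolding in_Linf_def by (auto intro: le_less_trans)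

lemma Linf_norm_diff_tendsto_0:
  fixes f :: "nat \<Rightarrow> real^'i \<Rightarrow> real"
  assumes meas: "\<And>n. (\<lambda>\<gamma>. f n \<gamma> - l \<gamma>) \<in> borel_measurable (lebesgue_on (boxB k))"
    and unif: "uniform_limit (boxB k) f l sequentially"
  shows "(\<lambda>n. e2ennreal (Linf_norm k (\<lambda>\<gamma>. f n \<gamma> - l \<gamma>))) \<longlonglongrightarrow> 0"
proof (rule order_tendstoI)
  fix a :: ennreal assume "0 < a"
  then obtain b where b: "0 < b" "b < a" using dense by blast
  define e where "e = enn2real b"
  have "b < top" using order.strict_trans2[OF b(2) top_greatest] .
  then have e: "0 < e" "ennreal e = b"
    using b(1) by (auto simp: e_def enn2real_positive_iff)
  show "\<forall>\<^sub>F n in sequentially. e2ennreal (Linf_norm k (\<lambda>\<gamma>. f n \<gamma> - l \<gamma>)) < a"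
    using uniform_limitD[OF unif e(1)]
  proof (rule eventually_mono)
    fix n assume "\<forall>\<gamma>\<in>boxB k. dist (f n \<gamma>) (l \<gamma>) < e"
    then have "Linf_norm k (\<lambda>\<gamma>. f n \<gamma> - l \<gamma>) \<le> ereal e"
      by (intro Linf_norm_le[OF meas]) (auto simp: dist_real_def less_imp_le)
    then have "e2ennreal (Linf_norm k (\<lambda>\<gamma>. f n \<gamma> - l \<gamma>)) \<le> b"
      using e2ennreal_mono e(2) by fastforce
    then show "e2ennreal (Linf_norm k (\<lambda>\<gamma>. f n \<gamma> - l \<gamma>)) < a" using b by simp
  qed
qed simp

lemma summable_half_power_times_linear:
  fixes c :: real assumes c: "0 \<le> c"
  shows "summable (\<lambda>k. (1/2)^Suc k * (1 + c * real (Suc k)))"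
proof (rule summable_ratio_test[where c="3/4" and N=1])
  fix n :: nat assume n: "1 \<le> n"
  have "c \<le> c * real n" using c n by (simp add: mult_le_cancel_left1)
  then have key: "2 * (1 + c * real (Suc (Suc n))) \<le> 3 * (1 + c * real (Suc n))"
    by (simp add: algebra_simps)
  have "(1/2::real)^Suc (Suc n) * (1 + c * real (Suc (Suc n)))
      = (1/2)^n / 8 * (2 * (1 + c * real (Suc (Suc n))))"
    by (simp add: field_simps)
  also have "\<dots> \<le> (1/2)^n / 8 * (3 * (1 + c * real (Suc n)))"
    by (rule mult_left_mono[OF key]) simp
  also have "\<dots> = 3/4 * ((1/2)^Suc n * (1 + c * real (Suc n)))"
    by (simp add: field_simps)
  finally show "norm ((1/2::real)^Suc (Suc n) * (1 + c * real (Suc (Suc n))))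
      \<le> 3/4 * norm ((1/2::real)^Suc n * (1 + c * real (Suc n)))"
    using c by (simp add: abs_of_nonneg)
qed simp

lemma ennreal_mult_le_ennreal_mult: "0 \<le> c \<Longrightarrow> x \<le> ennreal m \<Longrightarrow> ennreal c * x \<le> ennreal (c * m)"
  by (simp add: ennreal_mult' mult_left_mono)

lemma ennreal_suminf_le_ennreal:
  fixes f :: "nat \<Rightarrow> ennreal"
  assumes "\<And>k. f k \<le> ennreal (M k)" "\<And>k. 0 \<le> M k" "summable M"
  shows "(\<Sum>k. f k) \<le> ennreal (\<Sum>k. M k)"
proof -
  have "(\<Sum>k. f k) \<le> (\<Sum>k. ennreal (M k))"
    by (intro suminf_le summableI assms(1))
  also have "\<dots> = ennreal (\<Sum>k. M k)"
    by (rule suminf_ennreal2[OF assms(2,3)])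
  finally show ?thesis .
qed

lemma ennreal_suminf_tendsto_0:
  fixes f :: "nat \<Rightarrow> nat \<Rightarrow> ennreal"
  assumes lim: "\<And>k. (\<lambda>n. f n k) \<longlonglongrightarrow> 0"
    and bound: "\<And>n k. f n k \<le> ennreal (M k)" and M: "\<And>k. 0 \<le> M k" "summable M"
  shows "(\<lambda>n. \<Sum>k. f n k) \<longlonglongrightarrow> 0"
proof -
  define a where "a n k = enn2real (f n k)" for n k
  have f_eq: "f n k = ennreal (a n k)" for n k
    using bound[of n k] by (simp add: a_def le_less_trans)
  have a_le: "a n k \<le> M k" for n k
    using bound[of n k] M(1) unfolding f_eq by (simp add: a_def)
  have a_nonneg: "0 \<le> a n k" for n k by (simp add: a_def)
  have "(\<lambda>n. \<Sum>k. a n k) \<longlonglongrightarrow> (\<Sum>k. 0::real)"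
  proof (rule conjunct2[OF conjunct2[OF tannerys_theorem[where M=M]]])
    show "(\<lambda>n. a n k) \<longlonglongrightarrow> 0" for k
      unfolding a_def using tendsto_enn2real[of "\<lambda>n. f n k" 0] lim by simp
    show "\<forall>\<^sub>F (k, n) in at_top \<times>\<^sub>F sequentially. norm (a n k) \<le> M k"
      by (rule always_eventually) (simp add: a_nonneg a_le)
  qed (use M in auto)
  then have "(\<lambda>n. ennreal (\<Sum>k. a n k)) \<longlonglongrightarrow> 0"
    using tendsto_ennrealI by fastforce
  moreover have "(\<Sum>k. f n k) = ennreal (\<Sum>k. a n k)" for n
    unfolding f_eq using a_nonneg a_le M
    by (intro suminf_ennreal2 summable_comparison_test'[OF M(2)]) auto
  ultimately show ?thesis by simp
qed

lemma weighted_Linf_norms_le: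
  assumes "\<And>k. Linf_norm (Suc k) f \<le> ereal (M k)" "\<And>k. 0 \<le> M k"
    and "summable (\<lambda>k. (1/2)^Suc k * M k)"
  shows "(\<Sum>k. ennreal ((1/2)^Suc k) * e2ennreal (Linf_norm (Suc k) f))
      \<le> ennreal (\<Sum>k. (1/2)^Suc k * M k)"
proof (rule ennreal_suminf_le_ennreal[OF _ _ assms(3)])
  fix k
  have "e2ennreal (Linf_norm (Suc k) f) \<le> ennreal (M k)"
    using e2ennreal_mono[OF assms(1)] by simp
  then show "ennreal ((1/2)^Suc k) * e2ennreal (Linf_norm (Suc k) f) \<le> ennreal ((1/2)^Suc k * M k)"
    by (rule ennreal_mult_le_ennreal_mult[rotated]) simp
qed (simp add: assms(2))

lemma normM_less_top:
  fixes G :: "real^'i \<Rightarrow> 'x \<Rightarrow> 's::finite \<Rightarrow> real"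
  assumes bound: "\<And>i j k. j \<in> Jx \<Longrightarrow> Linf_norm (Suc k) (\<lambda>\<gamma>. G \<gamma> (xe j) (se i)) \<le> ereal (M k)"
    and M: "\<And>k. 0 \<le> M k" "summable (\<lambda>k. (1/2)^Suc k * M k)"
  shows "normM se xe Jx G < \<infinity>"
proof -
  define W where "W = (\<Sum>k. (1/2::real)^Suc k * M k)"
  have W: "0 \<le> W" unfolding W_def using M by (intro suminf_nonneg) auto
  define outer where "outer i = (\<Sum>j. if j \<in> Jx then ennreal ((1/2)^j) *
          (\<Sum>k. ennreal ((1/2)^Suc k) * e2ennreal (Linf_norm (Suc k) (\<lambda>\<gamma>. G \<gamma> (xe j) (se i))))
        else 0)" for i
  have "outer i \<le> ennreal (\<Sum>j. (1/2)^j * W)" for i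
    unfolding outer_def
  proof (rule ennreal_suminf_le_ennreal)
    fix j
    show "(if j \<in> Jx then ennreal ((1/2)^j) *
          (\<Sum>k. ennreal ((1/2)^Suc k) * e2ennreal (Linf_norm (Suc k) (\<lambda>\<gamma>. G \<gamma> (xe j) (se i))))
        else 0) \<le> ennreal ((1/2)^j * W)"
      using weighted_Linf_norms_le[OF bound M] W
      by (auto simp: W_def intro: ennreal_mult_le_ennreal_mult)
  qed (use W in \<open>auto intro: summable_mult2 summable_geometric\<close>)
  then have "outer i < top" for i
    using le_less_trans ennreal_less_top by blast
  then show ?thesis
    unfolding normM_def outer_def[symmetric] by (simp add: ennreal_mult_less_top)
qed

lemma normM_tendsto_0:
  fixes G :: "nat \<Rightarrow> real^'i \<Rightarrow> 'x \<Rightarrow> 's::finite \<Rightarrow> real"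
  assumes bound: "\<And>n i j k. j \<in> Jx \<Longrightarrow> Linf_norm (Suc k) (\<lambda>\<gamma>. G n \<gamma> (xe j) (se i)) \<le> ereal (M k)"
    and M: "\<And>k. 0 \<le> M k" "summable (\<lambda>k. (1/2)^Suc k * M k)"
    and lim: "\<And>i j k. j \<in> Jx \<Longrightarrow>
      (\<lambda>n. e2ennreal (Linf_norm (Suc k) (\<lambda>\<gamma>. G n \<gamma> (xe j) (se i)))) \<longlonglongrightarrow> 0"
  shows "(\<lambda>n. normM se xe Jx (G n)) \<longlonglongrightarrow> 0"
proof -
  define W where "W = (\<Sum>k. (1/2::real)^Suc k * M k)"
  have W: "0 \<le> W" unfolding W_def using M by (intro suminf_nonneg) auto
  define inner where "inner n i j =
      (\<Sum>k. ennreal ((1/2)^Suc k) * e2ennreal (Linf_norm (Suc k) (\<lambda>\<gamma>. G n \<gamma> (xe j) (se i))))" for n i j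
  have inner_lim: "(\<lambda>n. inner n i j) \<longlonglongrightarrow> 0" if "j \<in> Jx" for i j
    unfolding inner_def
  proof (rule ennreal_suminf_tendsto_0[OF _ _ _ M(2)])
    show "(\<lambda>n. ennreal ((1/2)^Suc k) * e2ennreal (Linf_norm (Suc k) (\<lambda>\<gamma>. G n \<gamma> (xe j) (se i))))
        \<longlonglongrightarrow> 0" for k
      using ennreal_tendsto_cmult[OF _ lim[OF that]] by simp
    show "ennreal ((1/2)^Suc k) * e2ennreal (Linf_norm (Suc k) (\<lambda>\<gamma>. G n \<gamma> (xe j) (se i)))
        \<le> ennreal ((1/2)^Suc k * M k)" for n k
      using e2ennreal_mono[OF bound[OF that]] by (intro ennreal_mult_le_ennreal_mult) simp_all
  qed (use M in simp)
  have outer_lim: "(\<lambda>n. \<Sum>j. if j \<in> Jx then ennreal ((1/2)^j) * inner n i j else 0) \<longlonglongrightarrow> 0" for i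
  proof (rule ennreal_suminf_tendsto_0)
    show "(\<lambda>n. if j \<in> Jx then ennreal ((1/2)^j) * inner n i j else 0) \<longlonglongrightarrow> 0" for j
      using ennreal_tendsto_cmult[OF _ inner_lim] by (cases "j \<in> Jx") auto
    show "(if j \<in> Jx then ennreal ((1/2)^j) * inner n i j else 0) \<le> ennreal ((1/2)^j * W)" for n j
      using weighted_Linf_norms_le[OF bound M] W
      by (auto simp: inner_def W_def intro: ennreal_mult_le_ennreal_mult)
  qed (use W in \<open>auto intro: summable_mult2 summable_geometric\<close>)
  have "(\<lambda>n. \<Sum>i\<in>{1..CARD('s)}. ennreal ((1/2)^i) *
      (\<Sum>j. if j \<in> Jx then ennreal ((1/2)^j) * inner n i j else 0)) \<longlonglongrightarrow> 0"
    using ennreal_tendsto_cmult[OF _ outer_lim] by (intro tendsto_null_sum) simp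
  then show ?thesis unfolding normM_def inner_def .
qed

section \<open>The constrained dynamic program\<close>

locale constrained_mdp =
  fixes P :: "'s::finite \<Rightarrow> 's \<Rightarrow> real" and \<beta> :: real and \<zeta> :: "'x \<Rightarrow> 'a \<Rightarrow> 's \<Rightarrow> 'x"
    and Aset :: "'a set" and Xset :: "'x set" and p r :: "'x \<Rightarrow> 'a \<Rightarrow> 's \<Rightarrow> real"
    and g :: "'i::finite \<Rightarrow> 'x \<Rightarrow> 'a \<Rightarrow> 's \<Rightarrow> real" and gbar :: "'i \<Rightarrow> real"
  assumes stochastic_P: "stochastic_matrix P"
    and A_fin: "finite Aset"
    and \<zeta>_X: "\<And>x a s. x \<in> Xset \<Longrightarrow> a \<in> Aset \<Longrightarrow> \<zeta> x a s \<in> Xset"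
    and r_bdd: "bounded ((\<lambda>(x, a, s). r x a s) ` (Xset \<times> Aset \<times> UNIV))"
    and g_bdd: "\<And>i. bounded ((\<lambda>(x, a, s). g i x a s) ` (Xset \<times> Aset \<times> UNIV))"
    and \<beta>_pos: "0 < \<beta>" and \<beta>_less_1: "\<beta> < 1"
    and feasible_exists: "\<And>x s. x \<in> Xset \<Longrightarrow> \<exists>a. feasible P \<beta> \<zeta> Aset p g gbar x s a"
begin

abbreviation feasible_plan :: "'x \<Rightarrow> 's \<Rightarrow> ('s list \<Rightarrow> 'a) \<Rightarrow> bool" where
  "feasible_plan \<equiv> feasible P \<beta> \<zeta> Aset p g gbar"

abbreviation B :: "(real^'i \<Rightarrow> 'x \<Rightarrow> 's \<Rightarrow> real) \<Rightarrow> real^'i \<Rightarrow> 'x \<Rightarrow> 's \<Rightarrow> real" where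
  "B \<equiv> bellman P \<beta> \<zeta> Aset p r g gbar"

lemma P_weighted_sum_const: "(\<Sum>s'\<in>UNIV. P s s' * c) = c"
  using stochastic_P by (simp add: stochastic_matrix_def flip: sum_distrib_right)

lemma P_weighted_sum_mono:
  "(\<And>s'. f s' \<le> h s') \<Longrightarrow> (\<Sum>s'\<in>UNIV. P s s' * f s') \<le> (\<Sum>s'\<in>UNIV. P s s' * h s')"
  using stochastic_P by (intro sum_mono mult_left_mono) (auto simp: stochastic_matrix_def)

definition sup_abs :: "('x \<Rightarrow> 'a \<Rightarrow> 's \<Rightarrow> real) \<Rightarrow> real" where
  "sup_abs u = (SUP (x, a, s)\<in>Xset \<times> Aset \<times> UNIV. \<bar>u x a s\<bar>)"

lemma abs_le_sup_abs:
  assumes "bounded ((\<lambda>(x, a, s). u x a s) ` (Xset \<times> Aset \<times> UNIV))" "x \<in> Xset" "a \<in> Aset"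
  shows "\<bar>u x a s\<bar> \<le> sup_abs u"
proof -
  obtain c where c: "\<And>y. y \<in> (\<lambda>(x, a, s). u x a s) ` (Xset \<times> Aset \<times> UNIV) \<Longrightarrow> norm y \<le> c"
    using assms(1) unfolding bounded_iff by blast
  have "bdd_above ((\<lambda>(x, a, s). \<bar>u x a s\<bar>) ` (Xset \<times> Aset \<times> UNIV))"
    by (rule bdd_aboveI[where M=c]) (use c in force)
  from cSUP_upper[OF _ this, of "(x, a, s)"] assms(2,3) show ?thesis
    unfolding sup_abs_def by simp
qed

lemma feasible_planD:
  assumes "feasible_plan x0 s0 a" "h \<noteq> []" "hd h = s0"
  shows "a h \<in> Aset" "0 \<le> p (traj \<zeta> a x0 h) (a h) (last h)"
  using assms unfolding feasible_def admissible_def by auto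

lemma feasible_plan_traj_in:
  assumes "feasible_plan x0 s0 a" "x0 \<in> Xset" "h \<noteq> []" "hd h = s0"
  shows "traj \<zeta> a x0 h \<in> Xset"
  by (rule traj_in_invariant_set[where X=Xset and A=Aset])
     (use \<zeta>_X feasible_planD(1)[OF assms(1)] assms(2-4) in auto)

lemma contval_abs_le:
  assumes "feasible_plan x0 s0 a" "x0 \<in> Xset" "h \<noteq> []" "hd h = s0"
    and u: "bounded ((\<lambda>(x, a, s). u x a s) ` (Xset \<times> Aset \<times> UNIV))"
  shows "\<bar>contval P \<beta> \<zeta> x0 a u h\<bar> \<le> sup_abs u / (1 - \<beta>)"
proof -
  have "\<bar>u (traj \<zeta> a x0 (h @ e)) (a (h @ e)) (last (h @ e))\<bar> \<le> sup_abs u" for e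
    using assms(3,4)
    by (intro abs_le_sup_abs[OF u] feasible_plan_traj_in[OF assms(1,2)] feasible_planD(1)[OF assms(1)]) auto
  then show ?thesis
    unfolding contval_eq_discounted_value
    by (rule discounted_value_abs_le[OF stochastic_P _ less_imp_le[OF \<beta>_pos] \<beta>_less_1])
qed

lemma contval_unfold:
  assumes "feasible_plan x s a" "x \<in> Xset"
    and u: "bounded ((\<lambda>(x, a, s). u x a s) ` (Xset \<times> Aset \<times> UNIV))"
  shows "contval P \<beta> \<zeta> x a u [s] = u x (a [s]) s
     + \<beta> * (\<Sum>s'\<in>UNIV. P s s' * contval P \<beta> \<zeta> (\<zeta> x (a [s]) s) (\<lambda>h. a (s # h)) u [s'])"
proof -
  have "\<bar>u (traj \<zeta> a x ([s] @ e)) (a ([s] @ e)) (last ([s] @ e))\<bar> \<le> sup_abs u" for e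
    by (intro abs_le_sup_abs[OF u] feasible_plan_traj_in[OF assms(1,2)] feasible_planD(1)[OF assms(1)]) auto
  then have "contval P \<beta> \<zeta> x a u [s] = u (traj \<zeta> a x [s]) (a [s]) (last [s])
     + \<beta> * (\<Sum>s'\<in>UNIV. P (last [s]) s' * contval P \<beta> \<zeta> x a u ([s] @ [s']))"
    unfolding contval_eq_discounted_value
    by (rule discounted_value_unfold[OF stochastic_P _ less_imp_le[OF \<beta>_pos] \<beta>_less_1])
  then show ?thesis by (simp add: traj_def contval_Cons_plan)
qed

lemma feasible_plan_continuation:
  assumes "feasible_plan x s a"
  shows "feasible_plan (\<zeta> x (a [s]) s) s' (\<lambda>h. a (s # h))"
  unfolding feasible_def admissible_def
proof (intro conjI allI impI)
  fix h assume h: "h \<noteq> [] \<and> hd h = s'"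
  show "a (s # h) \<in> Aset" by (rule feasible_planD(1)[OF assms]) auto
  show "0 \<le> p (traj \<zeta> (\<lambda>h. a (s # h)) (\<zeta> x (a [s]) s) h) (a (s # h)) (last h)"
    using feasible_planD(2)[OF assms, of "s # h"] h by (simp add: traj_Cons_plan)
  show "gbar i \<le> contval P \<beta> \<zeta> (\<zeta> x (a [s]) s) (\<lambda>h. a (s # h)) (g i) h" for i
    using assms h unfolding contval_Cons_plan[OF conjunct1[OF h]] feasible_def by auto
qed

definition actions :: "'x \<Rightarrow> 's \<Rightarrow> 'a set" where
  "actions x s = {a \<in> Aset. 0 \<le> p x a s}"

lemma finite_actions: "finite (actions x s)"
  using A_fin unfolding actions_def by simp

lemma feasible_plan_first_action: "feasible_plan x s a \<Longrightarrow> a [s] \<in> actions x s"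
  using feasible_planD[of x s a "[s]"] unfolding actions_def by (simp add: traj_def)

lemma actions_nonempty: "x \<in> Xset \<Longrightarrow> actions x s \<noteq> {}"
  using feasible_exists[of x s] feasible_plan_first_action by blast

definition L :: real where
  "L = Lconst Xset Aset \<beta> r g"

lemma L_eq: "L = (sup_abs r + (\<Sum>i\<in>UNIV. sup_abs (g i))) / (1 - \<beta>)"
  by (simp add: L_def Lconst_def sup_abs_def)

lemma sup_abs_le_L:
  assumes "x \<in> Xset"
  shows "sup_abs r \<le> (1 - \<beta>) * L" "sup_abs (g i) \<le> (1 - \<beta>) * L" "0 \<le> L"
proof -
  obtain a where a: "a \<in> Aset" using actions_nonempty[OF assms] by (auto simp: actions_def)
  have nonneg: "0 \<le> sup_abs r" "0 \<le> sup_abs (g j)" for j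
    using abs_le_sup_abs[OF r_bdd assms a] abs_le_sup_abs[OF g_bdd assms a] by (meson abs_ge_zero order_trans)+
  have "sup_abs (g i) \<le> (\<Sum>j\<in>UNIV. sup_abs (g j))"
    by (rule member_le_sum) (auto simp: nonneg)
  moreover have "0 \<le> (\<Sum>j\<in>UNIV. sup_abs (g j))"
    by (rule sum_nonneg) (simp add: nonneg)
  ultimately show "sup_abs r \<le> (1 - \<beta>) * L" "sup_abs (g i) \<le> (1 - \<beta>) * L" "0 \<le> L"
    using \<beta>_less_1 nonneg unfolding L_eq by auto
qed

lemma payoff_abs_le:
  assumes "x \<in> Xset" "a \<in> Aset"
  shows "\<bar>r x a s\<bar> \<le> (1 - \<beta>) * L" "\<bar>g i x a s\<bar> \<le> (1 - \<beta>) * L"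
  using abs_le_sup_abs[OF r_bdd assms] abs_le_sup_abs[OF g_bdd assms] sup_abs_le_L[OF assms(1)]
  by (meson order_trans)+

lemma contval_abs_le_L:
  assumes "feasible_plan x s a" "x \<in> Xset"
  shows "\<bar>contval P \<beta> \<zeta> x a r [s]\<bar> \<le> L" "\<bar>contval P \<beta> \<zeta> x a (g i) [s]\<bar> \<le> L"
proof -
  have "sup_abs u / (1 - \<beta>) \<le> L" if "sup_abs u \<le> (1 - \<beta>) * L" for u
    using that \<beta>_less_1 by (simp add: divide_le_eq mult.commute)
  then show "\<bar>contval P \<beta> \<zeta> x a r [s]\<bar> \<le> L" "\<bar>contval P \<beta> \<zeta> x a (g i) [s]\<bar> \<le> L"
    using contval_abs_le[OF assms, of "[s]"] r_bdd g_bdd sup_abs_le_L[OF assms(2)]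
    by (meson list.sel(1) not_Cons_self2 order_trans)+
qed

section \<open>Values of feasible plans\<close>

definition plan_value :: "'x \<Rightarrow> 's \<Rightarrow> ('s list \<Rightarrow> 'a) \<Rightarrow> real^'i \<Rightarrow> real" where
  "plan_value x s a \<gamma> = contval P \<beta> \<zeta> x a r [s] + (\<Sum>i\<in>UNIV. \<gamma>$i * contval P \<beta> \<zeta> x a (g i) [s])"

definition F_upper :: "real^'i \<Rightarrow> 'x \<Rightarrow> 's \<Rightarrow> real" where
  "F_upper \<gamma> x s = (1 + (\<Sum>i\<in>UNIV. \<gamma>$i)) * L"

lemma abs_plan_value_le_F_upper:
  assumes "feasible_plan x s a" "x \<in> Xset" "\<gamma> \<in> nonneg_orth"
  shows "\<bar>plan_value x s a \<gamma>\<bar> \<le> F_upper \<gamma> x s"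
proof -
  have "\<bar>\<gamma>$i * contval P \<beta> \<zeta> x a (g i) [s]\<bar> \<le> \<gamma>$i * L" for i
    using contval_abs_le_L(2)[OF assms(1,2)] assms(3)
    by (simp add: abs_mult nonneg_orth_def mult_left_mono)
  then have "\<bar>\<Sum>i\<in>UNIV. \<gamma>$i * contval P \<beta> \<zeta> x a (g i) [s]\<bar> \<le> (\<Sum>i\<in>UNIV. \<gamma>$i) * L"
    unfolding sum_distrib_right by (rule order_trans[OF sum_abs sum_mono])
  then have "\<bar>plan_value x s a \<gamma>\<bar> \<le> L + (\<Sum>i\<in>UNIV. \<gamma>$i) * L"
    using contval_abs_le_L(1)[OF assms(1,2)] abs_triangle_ineq unfolding plan_value_def
    by (smt (verit))
  then show ?thesis by (simp add: F_upper_def algebra_simps)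
qed

lemma plan_value_add_multipliers:
  "plan_value x s a (\<gamma> + \<mu>) = plan_value x s a \<gamma> + (\<Sum>i\<in>UNIV. \<mu>$i * contval P \<beta> \<zeta> x a (g i) [s])"
  by (simp add: plan_value_def distrib_right sum.distrib)

lemma plan_value_unfold:
  assumes "feasible_plan x s a" "x \<in> Xset"
  shows "plan_value x s a \<gamma> = r x (a [s]) s + (\<Sum>i\<in>UNIV. \<gamma>$i * g i x (a [s]) s)
    + \<beta> * (\<Sum>s'\<in>UNIV. P s s' * plan_value (\<zeta> x (a [s]) s) s' (\<lambda>h. a (s # h)) \<gamma>)"
proof -
  define W where "W u s' = contval P \<beta> \<zeta> (\<zeta> x (a [s]) s) (\<lambda>h. a (s # h)) u [s']" for u s'
  have "(\<Sum>s'\<in>UNIV. P s s' * (\<Sum>i\<in>UNIV. \<gamma>$i * W (g i) s'))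
      = (\<Sum>s'\<in>UNIV. \<Sum>i\<in>UNIV. \<gamma>$i * (P s s' * W (g i) s'))"
    by (simp add: sum_distrib_left mult.left_commute)
  also have "\<dots> = (\<Sum>i\<in>UNIV. \<Sum>s'\<in>UNIV. \<gamma>$i * (P s s' * W (g i) s'))"
    by (rule sum.swap)
  finally have swap: "(\<Sum>s'\<in>UNIV. P s s' * (\<Sum>i\<in>UNIV. \<gamma>$i * W (g i) s'))
      = (\<Sum>i\<in>UNIV. \<gamma>$i * (\<Sum>s'\<in>UNIV. P s s' * W (g i) s'))"
    by (simp add: sum_distrib_left)
  have "(\<Sum>i\<in>UNIV. \<gamma>$i * (g i x (a [s]) s + \<beta> * (\<Sum>s'\<in>UNIV. P s s' * W (g i) s')))
      = (\<Sum>i\<in>UNIV. \<gamma>$i * g i x (a [s]) s) + \<beta> * (\<Sum>i\<in>UNIV. \<gamma>$i * (\<Sum>s'\<in>UNIV. P s s' * W (g i) s'))"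
    by (simp add: distrib_left sum.distrib sum_distrib_left mult.left_commute)
  moreover have "(\<Sum>s'\<in>UNIV. P s s' * (W r s' + (\<Sum>i\<in>UNIV. \<gamma>$i * W (g i) s')))
      = (\<Sum>s'\<in>UNIV. P s s' * W r s') + (\<Sum>s'\<in>UNIV. P s s' * (\<Sum>i\<in>UNIV. \<gamma>$i * W (g i) s'))"
    by (simp add: distrib_left sum.distrib)
  ultimately show ?thesis
    unfolding plan_value_def contval_unfold[OF assms r_bdd] contval_unfold[OF assms g_bdd] W_def[symmetric]
    by (simp add: swap distrib_left)
qed

section \<open>The conditions defining N\<close>

text \<open>Conditions (iii), (iv), (ii) and (i) of the definition of N; plan_value x s a \<gamma> is the
  quantity v^0 + \<Sum>_i \<gamma>^i v^i of (iii).\<close>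

definition dominates_plan_values :: "(real^'i \<Rightarrow> 'x \<Rightarrow> 's \<Rightarrow> real) \<Rightarrow> bool" where
  "dominates_plan_values F \<longleftrightarrow> (\<forall>x\<in>Xset. \<forall>s a. feasible_plan x s a \<longrightarrow>
     (\<forall>\<gamma>\<in>nonneg_orth. plan_value x s a \<gamma> \<le> F \<gamma> x s))"

definition le_F_upper :: "(real^'i \<Rightarrow> 'x \<Rightarrow> 's \<Rightarrow> real) \<Rightarrow> bool" where
  "le_F_upper F \<longleftrightarrow> (\<forall>x\<in>Xset. \<forall>s. \<forall>\<gamma>\<in>nonneg_orth. F \<gamma> x s \<le> F_upper \<gamma> x s)"

definition l1_lipschitz :: "(real^'i \<Rightarrow> 'x \<Rightarrow> 's \<Rightarrow> real) \<Rightarrow> bool" where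
  "l1_lipschitz F \<longleftrightarrow> (\<forall>x\<in>Xset. \<forall>s. \<forall>\<gamma>1\<in>nonneg_orth. \<forall>\<gamma>2\<in>nonneg_orth.
     \<bar>F \<gamma>1 x s - F \<gamma>2 x s\<bar> \<le> L * (\<Sum>i\<in>UNIV. \<bar>\<gamma>1$i - \<gamma>2$i\<bar>))"

definition convex_in_multipliers :: "(real^'i \<Rightarrow> 'x \<Rightarrow> 's \<Rightarrow> real) \<Rightarrow> bool" where
  "convex_in_multipliers F \<longleftrightarrow> (\<forall>x\<in>Xset. \<forall>s. convex_on nonneg_orth (\<lambda>\<gamma>. F \<gamma> x s))"

definition N_pointwise :: "(real^'i \<Rightarrow> 'x \<Rightarrow> 's \<Rightarrow> real) \<Rightarrow> bool" where
  "N_pointwise F \<longleftrightarrow>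
     convex_in_multipliers F \<and> l1_lipschitz F \<and> dominates_plan_values F \<and> le_F_upper F"

lemma in_N_iff: "in_N se xe Jx Xset P \<beta> \<zeta> Aset p r g gbar F \<longleftrightarrow> in_M se xe Jx Xset F \<and> N_pointwise F"
  unfolding in_N_def N_pointwise_def convex_in_multipliers_def l1_lipschitz_def
    dominates_plan_values_def le_F_upper_def plan_value_def F_upper_def L_def
  by blast

lemma N_pointwiseD:
  assumes "N_pointwise F"
  shows "convex_in_multipliers F" "l1_lipschitz F" "dominates_plan_values F" "le_F_upper F"
  using assms unfolding N_pointwise_def by auto

section \<open>Lagrangian weak duality\<close>

definition lagrangian ::
    "(real^'i \<Rightarrow> 'x \<Rightarrow> 's \<Rightarrow> real) \<Rightarrow> real^'i \<Rightarrow> 'x \<Rightarrow> 's \<Rightarrow> real^'i \<Rightarrow> 'a \<Rightarrow> real" where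
  "lagrangian F \<gamma> x s \<mu> a = r x a s
      + (\<Sum>i\<in>UNIV. \<gamma>$i * g i x a s + \<mu>$i * (g i x a s - gbar i))
      + \<beta> * (\<Sum>s'\<in>UNIV. P s s' * F (\<gamma> + \<mu>) (\<zeta> x a s) s')"

definition max_lagrangian :: "(real^'i \<Rightarrow> 'x \<Rightarrow> 's \<Rightarrow> real) \<Rightarrow> real^'i \<Rightarrow> 'x \<Rightarrow> 's \<Rightarrow> real^'i \<Rightarrow> real" where
  "max_lagrangian F \<gamma> x s \<mu> = Sup (lagrangian F \<gamma> x s \<mu> ` actions x s)"

lemma bellman_eq_INF_max_lagrangian: "B F \<gamma> x s = (INF \<mu>\<in>nonneg_orth. max_lagrangian F \<gamma> x s \<mu>)"
  unfolding bellman_def max_lagrangian_def lagrangian_def actions_def ..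

lemma lagrangian_le_max_lagrangian:
  "a \<in> actions x s \<Longrightarrow> lagrangian F \<gamma> x s \<mu> a \<le> max_lagrangian F \<gamma> x s \<mu>"
  unfolding max_lagrangian_def by (rule cSup_upper) (auto intro!: bdd_above_finite finite_imageI finite_actions)

lemma max_lagrangian_le:
  "x \<in> Xset \<Longrightarrow> (\<And>a. a \<in> actions x s \<Longrightarrow> lagrangian F \<gamma> x s \<mu> a \<le> c) \<Longrightarrow> max_lagrangian F \<gamma> x s \<mu> \<le> c"
  unfolding max_lagrangian_def by (rule cSup_least) (use actions_nonempty in auto)

lemma plan_value_le_max_lagrangian:
  assumes F: "dominates_plan_values F" and x: "x \<in> Xset"
    and \<gamma>: "\<gamma> \<in> nonneg_orth" and \<mu>: "\<mu> \<in> nonneg_orth" and a: "feasible_plan x s a"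
  shows "plan_value x s a \<gamma> \<le> max_lagrangian F \<gamma> x s \<mu>"
proof -
  define x' a' where "x' = \<zeta> x (a [s]) s" and "a' = (\<lambda>h. a (s # h))"
  have "x' \<in> Xset"
    using \<zeta>_X[OF x] feasible_plan_first_action[OF a] by (simp add: x'_def actions_def)
  then have continuation: "plan_value x' s' a' (\<gamma> + \<mu>) \<le> F (\<gamma> + \<mu>) x' s'" for s'
    using F feasible_plan_continuation[OF a] nonneg_orth_add[OF \<gamma> \<mu>]
    unfolding dominates_plan_values_def x'_def a'_def by blast
  have "(\<Sum>i\<in>UNIV. \<mu>$i * gbar i) \<le> (\<Sum>i\<in>UNIV. \<mu>$i * contval P \<beta> \<zeta> x a (g i) [s])"
    using a \<mu> by (intro sum_mono mult_left_mono) (auto simp: feasible_def nonneg_orth_def)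
  then have "plan_value x s a \<gamma> \<le> plan_value x s a (\<gamma> + \<mu>) - (\<Sum>i\<in>UNIV. \<mu>$i * gbar i)"
    by (simp add: plan_value_add_multipliers)
  also have "\<dots> = r x (a [s]) s + (\<Sum>i\<in>UNIV. (\<gamma> + \<mu>)$i * g i x (a [s]) s) - (\<Sum>i\<in>UNIV. \<mu>$i * gbar i)
      + \<beta> * (\<Sum>s'\<in>UNIV. P s s' * plan_value x' s' a' (\<gamma> + \<mu>))"
    unfolding plan_value_unfold[OF a x] x'_def a'_def by simp
  also have "\<dots> \<le> r x (a [s]) s + (\<Sum>i\<in>UNIV. (\<gamma> + \<mu>)$i * g i x (a [s]) s) - (\<Sum>i\<in>UNIV. \<mu>$i * gbar i)
      + \<beta> * (\<Sum>s'\<in>UNIV. P s s' * F (\<gamma> + \<mu>) x' s')"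
    using mult_left_mono[OF P_weighted_sum_mono[OF continuation] less_imp_le[OF \<beta>_pos]] by simp
  also have "\<dots> = lagrangian F \<gamma> x s \<mu> (a [s])"
    unfolding lagrangian_def x'_def by (simp add: algebra_simps sum.distrib sum_subtractf)
  also have "\<dots> \<le> max_lagrangian F \<gamma> x s \<mu>"
    by (rule lagrangian_le_max_lagrangian[OF feasible_plan_first_action[OF a]])
  finally show ?thesis .
qed

lemma max_lagrangian_bdd_below:
  assumes "dominates_plan_values F" "x \<in> Xset" "\<gamma> \<in> nonneg_orth"
  shows "bdd_below (max_lagrangian F \<gamma> x s ` nonneg_orth)"
proof -
  obtain a where "feasible_plan x s a" using feasible_exists[OF assms(2)] by blast
  then show ?thesis
    by (intro bdd_belowI2) (rule plan_value_le_max_lagrangian[OF assms])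
qed

lemma bellman_le_max_lagrangian:
  assumes "dominates_plan_values F" "x \<in> Xset" "\<gamma> \<in> nonneg_orth" "\<mu> \<in> nonneg_orth"
  shows "B F \<gamma> x s \<le> max_lagrangian F \<gamma> x s \<mu>"
  unfolding bellman_eq_INF_max_lagrangian
  by (rule cINF_lower[OF max_lagrangian_bdd_below[OF assms(1-3)] assms(4)])

lemma dominates_plan_values_bellman: "dominates_plan_values F \<Longrightarrow> dominates_plan_values (B F)"
  unfolding dominates_plan_values_def[of "B F"] bellman_eq_INF_max_lagrangian
  using zero_in_nonneg_orth
  by (intro ballI allI impI cINF_greatest plan_value_le_max_lagrangian) auto

section \<open>The Bellman operator preserves conditions (i)--(iv)\<close>

lemma le_F_upper_bellman:
  assumes LB: "dominates_plan_values F" and UB: "le_F_upper F"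
  shows "le_F_upper (B F)"
  unfolding le_F_upper_def
proof (intro ballI allI)
  fix x s and \<gamma> :: "real^'i" assume x: "x \<in> Xset" and \<gamma>: "\<gamma> \<in> nonneg_orth"
  have "max_lagrangian F \<gamma> x s 0 \<le> F_upper \<gamma> x s"
  proof (rule max_lagrangian_le[OF x])
    fix a assume "a \<in> actions x s"
    then have a: "a \<in> Aset" and x': "\<zeta> x a s \<in> Xset" using \<zeta>_X[OF x] by (auto simp: actions_def)
    have "(\<Sum>i\<in>UNIV. \<gamma>$i * g i x a s) \<le> (\<Sum>i\<in>UNIV. \<gamma>$i) * ((1 - \<beta>) * L)"
      unfolding sum_distrib_right using payoff_abs_le(2)[OF x a] \<gamma>
      by (intro sum_mono mult_left_mono) (auto simp: nonneg_orth_def abs_le_iff)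
    moreover have "(\<Sum>s'\<in>UNIV. P s s' * F \<gamma> (\<zeta> x a s) s') \<le> F_upper \<gamma> x s"
      using P_weighted_sum_mono[of "\<lambda>s'. F \<gamma> (\<zeta> x a s) s'" "\<lambda>_. F_upper \<gamma> x s" s] UB x' \<gamma>
      by (simp add: le_F_upper_def F_upper_def P_weighted_sum_const)
    moreover have "r x a s \<le> (1 - \<beta>) * L" using payoff_abs_le(1)[OF x a, of s] by (simp add: abs_le_iff)
    ultimately have "lagrangian F \<gamma> x s 0 a \<le> (1 - \<beta>) * L + (\<Sum>i\<in>UNIV. \<gamma>$i) * ((1 - \<beta>) * L) + \<beta> * F_upper \<gamma> x s"
      unfolding lagrangian_def using \<beta>_pos by (simp add: add_mono mult_left_mono)
    also have "\<dots> = F_upper \<gamma> x s"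
      by (simp add: F_upper_def algebra_simps)
    finally show "lagrangian F \<gamma> x s 0 a \<le> F_upper \<gamma> x s" .
  qed
  then show "B F \<gamma> x s \<le> F_upper \<gamma> x s"
    using bellman_le_max_lagrangian[OF LB x \<gamma> zero_in_nonneg_orth, of s] by simp
qed

lemma bellman_mono:
  assumes LB: "dominates_plan_values F"
    and le: "\<And>x s \<gamma>. x \<in> Xset \<Longrightarrow> \<gamma> \<in> nonneg_orth \<Longrightarrow> F \<gamma> x s \<le> G \<gamma> x s"
    and x: "x \<in> Xset" and \<gamma>: "\<gamma> \<in> nonneg_orth"
  shows "B F \<gamma> x s \<le> B G \<gamma> x s"
  unfolding bellman_eq_INF_max_lagrangian
proof (rule cINF_mono[OF _ max_lagrangian_bdd_below[OF LB x \<gamma>]])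
  fix \<mu> :: "real^'i" assume \<mu>: "\<mu> \<in> nonneg_orth"
  have "max_lagrangian F \<gamma> x s \<mu> \<le> max_lagrangian G \<gamma> x s \<mu>"
  proof (rule max_lagrangian_le[OF x])
    fix a assume a: "a \<in> actions x s"
    then have "\<zeta> x a s \<in> Xset" using \<zeta>_X[OF x] by (simp add: actions_def)
    then have "lagrangian F \<gamma> x s \<mu> a \<le> lagrangian G \<gamma> x s \<mu> a"
      unfolding lagrangian_def using \<beta>_pos nonneg_orth_add[OF \<gamma> \<mu>]
      by (auto intro!: mult_left_mono P_weighted_sum_mono le)
    also have "\<dots> \<le> max_lagrangian G \<gamma> x s \<mu>" by (rule lagrangian_le_max_lagrangian[OF a])
    finally show "lagrangian F \<gamma> x s \<mu> a \<le> max_lagrangian G \<gamma> x s \<mu>" .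
  qed
  then show "\<exists>\<mu>'\<in>nonneg_orth. max_lagrangian F \<gamma> x s \<mu>' \<le> max_lagrangian G \<gamma> x s \<mu>"
    using \<mu> by blast
qed (use zero_in_nonneg_orth in blast)

lemma lagrangian_le_lagrangian_plus_l1_dist:
  assumes LIP: "l1_lipschitz F" and x: "x \<in> Xset" and a: "a \<in> actions x s"
    and \<gamma>1: "\<gamma>1 \<in> nonneg_orth" and \<gamma>2: "\<gamma>2 \<in> nonneg_orth" and \<mu>: "\<mu> \<in> nonneg_orth"
  shows "lagrangian F \<gamma>1 x s \<mu> a \<le> lagrangian F \<gamma>2 x s \<mu> a + L * (\<Sum>i\<in>UNIV. \<bar>\<gamma>1$i - \<gamma>2$i\<bar>)"
proof -
  define d where "d = (\<Sum>i\<in>UNIV. \<bar>\<gamma>1$i - \<gamma>2$i\<bar>)"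
  have aA: "a \<in> Aset" and x': "\<zeta> x a s \<in> Xset" using a \<zeta>_X[OF x] by (auto simp: actions_def)
  have "(\<gamma>1$i - \<gamma>2$i) * g i x a s \<le> \<bar>\<gamma>1$i - \<gamma>2$i\<bar> * ((1 - \<beta>) * L)" for i
  proof -
    have "(\<gamma>1$i - \<gamma>2$i) * g i x a s \<le> \<bar>\<gamma>1$i - \<gamma>2$i\<bar> * \<bar>g i x a s\<bar>"
      by (metis abs_ge_self abs_mult)
    also have "\<dots> \<le> \<bar>\<gamma>1$i - \<gamma>2$i\<bar> * ((1 - \<beta>) * L)"
      by (intro mult_left_mono payoff_abs_le(2)[OF x aA]) simp
    finally show ?thesis .
  qed
  then have payoff: "(\<Sum>i\<in>UNIV. (\<gamma>1$i - \<gamma>2$i) * g i x a s) \<le> (1 - \<beta>) * L * d"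
    unfolding d_def sum_distrib_left by (intro sum_mono) (simp add: mult_ac)
  have lip: "\<bar>F (\<gamma>1 + \<mu>) (\<zeta> x a s) s' - F (\<gamma>2 + \<mu>) (\<zeta> x a s) s'\<bar>
      \<le> L * (\<Sum>i\<in>UNIV. \<bar>(\<gamma>1 + \<mu>)$i - (\<gamma>2 + \<mu>)$i\<bar>)" for s'
    using LIP x' nonneg_orth_add[OF \<gamma>1 \<mu>] nonneg_orth_add[OF \<gamma>2 \<mu>]
    unfolding l1_lipschitz_def by blast
  have "F (\<gamma>1 + \<mu>) (\<zeta> x a s) s' \<le> F (\<gamma>2 + \<mu>) (\<zeta> x a s) s' + L * d" for s'
    using lip[of s'] unfolding d_def by (simp add: abs_le_iff)
  then have "(\<Sum>s'\<in>UNIV. P s s' * F (\<gamma>1 + \<mu>) (\<zeta> x a s) s')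
      \<le> (\<Sum>s'\<in>UNIV. P s s' * (F (\<gamma>2 + \<mu>) (\<zeta> x a s) s' + L * d))"
    by (rule P_weighted_sum_mono)
  also have "\<dots> = (\<Sum>s'\<in>UNIV. P s s' * F (\<gamma>2 + \<mu>) (\<zeta> x a s) s') + L * d"
    by (simp add: distrib_left sum.distrib P_weighted_sum_const)
  finally have "(\<Sum>s'\<in>UNIV. P s s' * F (\<gamma>1 + \<mu>) (\<zeta> x a s) s')
      \<le> (\<Sum>s'\<in>UNIV. P s s' * F (\<gamma>2 + \<mu>) (\<zeta> x a s) s') + L * d" .
  from mult_left_mono[OF this less_imp_le[OF \<beta>_pos]]
  have continuation: "\<beta> * (\<Sum>s'\<in>UNIV. P s s' * F (\<gamma>1 + \<mu>) (\<zeta> x a s) s')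
      \<le> \<beta> * (\<Sum>s'\<in>UNIV. P s s' * F (\<gamma>2 + \<mu>) (\<zeta> x a s) s') + \<beta> * (L * d)"
    by (simp add: distrib_left)
  have "(\<Sum>i\<in>UNIV. \<gamma>1$i * g i x a s + \<mu>$i * (g i x a s - gbar i))
      = (\<Sum>i\<in>UNIV. \<gamma>2$i * g i x a s + \<mu>$i * (g i x a s - gbar i))
        + (\<Sum>i\<in>UNIV. (\<gamma>1$i - \<gamma>2$i) * g i x a s)"
    by (simp add: sum.distrib[symmetric] algebra_simps)
  then have "lagrangian F \<gamma>1 x s \<mu> a \<le> lagrangian F \<gamma>2 x s \<mu> a + (1 - \<beta>) * L * d + \<beta> * (L * d)"
    using payoff continuation unfolding lagrangian_def by linarith
  then show ?thesis unfolding d_def by (simp add: algebra_simps)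
qed

lemma bellman_le_bellman_plus_l1_dist:
  assumes LB: "dominates_plan_values F" and LIP: "l1_lipschitz F" and x: "x \<in> Xset"
    and \<gamma>1: "\<gamma>1 \<in> nonneg_orth" and \<gamma>2: "\<gamma>2 \<in> nonneg_orth"
  shows "B F \<gamma>1 x s \<le> B F \<gamma>2 x s + L * (\<Sum>i\<in>UNIV. \<bar>\<gamma>1$i - \<gamma>2$i\<bar>)"
proof -
  define d where "d = (\<Sum>i\<in>UNIV. \<bar>\<gamma>1$i - \<gamma>2$i\<bar>)"
  have "max_lagrangian F \<gamma>1 x s \<mu> \<le> max_lagrangian F \<gamma>2 x s \<mu> + L * d" if \<mu>: "\<mu> \<in> nonneg_orth" for \<mu>
  proof (rule max_lagrangian_le[OF x])
    fix a assume a: "a \<in> actions x s"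
    show "lagrangian F \<gamma>1 x s \<mu> a \<le> max_lagrangian F \<gamma>2 x s \<mu> + L * d"
      using lagrangian_le_lagrangian_plus_l1_dist[OF LIP x a \<gamma>1 \<gamma>2 \<mu>]
        lagrangian_le_max_lagrangian[OF a, of F \<gamma>2 \<mu>]
      unfolding d_def by linarith
  qed
  then have "B F \<gamma>1 x s - L * d \<le> max_lagrangian F \<gamma>2 x s \<mu>" if "\<mu> \<in> nonneg_orth" for \<mu>
    using bellman_le_max_lagrangian[OF LB x \<gamma>1 that, of s] that by fastforce
  then have "B F \<gamma>1 x s - L * d \<le> B F \<gamma>2 x s"
    unfolding bellman_eq_INF_max_lagrangian[of F \<gamma>2]
    using zero_in_nonneg_orth by (intro cINF_greatest) auto
  then show ?thesis unfolding d_def by simp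
qed

lemma l1_lipschitz_bellman:
  assumes "dominates_plan_values F" "l1_lipschitz F"
  shows "l1_lipschitz (B F)"
  unfolding l1_lipschitz_def
proof (intro ballI allI)
  fix x s and \<gamma>1 \<gamma>2 :: "real^'i"
  assume "x \<in> Xset" "\<gamma>1 \<in> nonneg_orth" "\<gamma>2 \<in> nonneg_orth"
  then show "\<bar>B F \<gamma>1 x s - B F \<gamma>2 x s\<bar> \<le> L * (\<Sum>i\<in>UNIV. \<bar>\<gamma>1$i - \<gamma>2$i\<bar>)"
    using bellman_le_bellman_plus_l1_dist[OF assms, of x \<gamma>1 \<gamma>2 s]
      bellman_le_bellman_plus_l1_dist[OF assms, of x \<gamma>2 \<gamma>1 s]
    by (simp add: abs_minus_commute abs_le_iff)
qed

lemma lagrangian_convex_comb: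
  assumes CVX: "convex_in_multipliers F" and x: "x \<in> Xset" and a: "a \<in> Aset"
    and \<gamma>: "\<gamma>1 \<in> nonneg_orth" "\<gamma>2 \<in> nonneg_orth" and \<mu>: "\<mu>1 \<in> nonneg_orth" "\<mu>2 \<in> nonneg_orth"
    and u: "0 \<le> u" and v: "0 \<le> v" and uv: "u + v = 1"
  shows "lagrangian F (u *\<^sub>R \<gamma>1 + v *\<^sub>R \<gamma>2) x s (u *\<^sub>R \<mu>1 + v *\<^sub>R \<mu>2) a
    \<le> u * lagrangian F \<gamma>1 x s \<mu>1 a + v * lagrangian F \<gamma>2 x s \<mu>2 a"
proof -
  have comb: "(u *\<^sub>R \<gamma>1 + v *\<^sub>R \<gamma>2) + (u *\<^sub>R \<mu>1 + v *\<^sub>R \<mu>2) = u *\<^sub>R (\<gamma>1 + \<mu>1) + v *\<^sub>R (\<gamma>2 + \<mu>2)"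
    by (simp add: algebra_simps)
  have F_comb: "F (u *\<^sub>R (\<gamma>1 + \<mu>1) + v *\<^sub>R (\<gamma>2 + \<mu>2)) (\<zeta> x a s) s'
      \<le> u * F (\<gamma>1 + \<mu>1) (\<zeta> x a s) s' + v * F (\<gamma>2 + \<mu>2) (\<zeta> x a s) s'" for s'
    using CVX \<zeta>_X[OF x a] nonneg_orth_add[OF \<gamma>(1) \<mu>(1)] nonneg_orth_add[OF \<gamma>(2) \<mu>(2)] u v uv
    unfolding convex_in_multipliers_def convex_on_def by blast
  have "(\<Sum>s'\<in>UNIV. P s s' * F ((u *\<^sub>R \<gamma>1 + v *\<^sub>R \<gamma>2) + (u *\<^sub>R \<mu>1 + v *\<^sub>R \<mu>2)) (\<zeta> x a s) s')
      \<le> (\<Sum>s'\<in>UNIV. P s s' * (u * F (\<gamma>1 + \<mu>1) (\<zeta> x a s) s' + v * F (\<gamma>2 + \<mu>2) (\<zeta> x a s) s'))"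
    unfolding comb by (rule P_weighted_sum_mono[OF F_comb])
  also have "\<dots> = u * (\<Sum>s'\<in>UNIV. P s s' * F (\<gamma>1 + \<mu>1) (\<zeta> x a s) s')
        + v * (\<Sum>s'\<in>UNIV. P s s' * F (\<gamma>2 + \<mu>2) (\<zeta> x a s) s')"
    by (simp add: sum_distrib_left sum.distrib algebra_simps)
  finally have "\<beta> * (\<Sum>s'\<in>UNIV. P s s' * F ((u *\<^sub>R \<gamma>1 + v *\<^sub>R \<gamma>2) + (u *\<^sub>R \<mu>1 + v *\<^sub>R \<mu>2)) (\<zeta> x a s) s')
      \<le> \<beta> * (u * (\<Sum>s'\<in>UNIV. P s s' * F (\<gamma>1 + \<mu>1) (\<zeta> x a s) s')
        + v * (\<Sum>s'\<in>UNIV. P s s' * F (\<gamma>2 + \<mu>2) (\<zeta> x a s) s'))"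
    by (rule mult_left_mono) (use \<beta>_pos in simp)
  moreover have "(\<Sum>i\<in>UNIV. (u *\<^sub>R \<gamma>1 + v *\<^sub>R \<gamma>2)$i * g i x a s + (u *\<^sub>R \<mu>1 + v *\<^sub>R \<mu>2)$i * (g i x a s - gbar i))
      = u * (\<Sum>i\<in>UNIV. \<gamma>1$i * g i x a s + \<mu>1$i * (g i x a s - gbar i))
        + v * (\<Sum>i\<in>UNIV. \<gamma>2$i * g i x a s + \<mu>2$i * (g i x a s - gbar i))"
    by (simp add: sum_distrib_left sum.distrib[symmetric] algebra_simps)
  moreover have "r x a s = u * r x a s + v * r x a s"
    using uv by (simp flip: distrib_right)
  ultimately show ?thesis
    unfolding lagrangian_def by (simp add: distrib_left algebra_simps)
qed

lemma max_lagrangian_jointly_convex: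
  assumes CVX: "convex_in_multipliers F" and x: "x \<in> Xset"
  shows "convex_on (nonneg_orth \<times> nonneg_orth) (\<lambda>(\<gamma>, \<mu>). max_lagrangian F \<gamma> x s \<mu>)"
  unfolding convex_on_def
proof (intro conjI ballI allI impI convex_Times convex_nonneg_orth)
  fix z1 z2 :: "(real^'i) \<times> (real^'i)" and u v :: real
  assume z: "z1 \<in> nonneg_orth \<times> nonneg_orth" "z2 \<in> nonneg_orth \<times> nonneg_orth"
    and u: "0 \<le> u" and v: "0 \<le> v" and uv: "u + v = 1"
  obtain \<gamma>1 \<mu>1 \<gamma>2 \<mu>2 where z_eq: "z1 = (\<gamma>1, \<mu>1)" "z2 = (\<gamma>2, \<mu>2)" by fastforce
  have "max_lagrangian F (u *\<^sub>R \<gamma>1 + v *\<^sub>R \<gamma>2) x s (u *\<^sub>R \<mu>1 + v *\<^sub>R \<mu>2)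
      \<le> u * max_lagrangian F \<gamma>1 x s \<mu>1 + v * max_lagrangian F \<gamma>2 x s \<mu>2"
  proof (rule max_lagrangian_le[OF x])
    fix a assume a: "a \<in> actions x s"
    have "lagrangian F (u *\<^sub>R \<gamma>1 + v *\<^sub>R \<gamma>2) x s (u *\<^sub>R \<mu>1 + v *\<^sub>R \<mu>2) a
        \<le> u * lagrangian F \<gamma>1 x s \<mu>1 a + v * lagrangian F \<gamma>2 x s \<mu>2 a"
      using z a u v uv unfolding z_eq
      by (intro lagrangian_convex_comb[OF CVX x]) (auto simp: actions_def)
    also have "\<dots> \<le> u * max_lagrangian F \<gamma>1 x s \<mu>1 + v * max_lagrangian F \<gamma>2 x s \<mu>2"
      using lagrangian_le_max_lagrangian[OF a] u v by (intro add_mono mult_left_mono) auto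
    finally show "lagrangian F (u *\<^sub>R \<gamma>1 + v *\<^sub>R \<gamma>2) x s (u *\<^sub>R \<mu>1 + v *\<^sub>R \<mu>2) a
        \<le> u * max_lagrangian F \<gamma>1 x s \<mu>1 + v * max_lagrangian F \<gamma>2 x s \<mu>2" .
  qed
  then show "(\<lambda>(\<gamma>, \<mu>). max_lagrangian F \<gamma> x s \<mu>) (u *\<^sub>R z1 + v *\<^sub>R z2)
      \<le> u * (\<lambda>(\<gamma>, \<mu>). max_lagrangian F \<gamma> x s \<mu>) z1 + v * (\<lambda>(\<gamma>, \<mu>). max_lagrangian F \<gamma> x s \<mu>) z2"
    unfolding z_eq by simp
qed

lemma convex_in_multipliers_bellman:
  assumes "dominates_plan_values F" "convex_in_multipliers F"
  shows "convex_in_multipliers (B F)"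
  unfolding convex_in_multipliers_def bellman_eq_INF_max_lagrangian
  using zero_in_nonneg_orth
  by (intro ballI allI convex_on_partial_cINF[OF convex_nonneg_orth]
        max_lagrangian_bdd_below[OF assms(1)] max_lagrangian_jointly_convex[OF assms(2)]) auto

lemma N_pointwise_bellman: "N_pointwise F \<Longrightarrow> N_pointwise (B F)"
  unfolding N_pointwise_def
  using convex_in_multipliers_bellman l1_lipschitz_bellman dominates_plan_values_bellman le_F_upper_bellman
  by blast

lemma N_pointwise_F_upper: "N_pointwise F_upper"
  unfolding N_pointwise_def
proof (intro conjI)
  show "convex_in_multipliers F_upper"
    unfolding convex_in_multipliers_def convex_on_def F_upper_def
  proof (intro ballI allI impI conjI convex_nonneg_orth)
    fix \<gamma>1 \<gamma>2 :: "real^'i" and u v :: real assume "u + v = 1"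
    then have "u * L + v * L = L" by (simp flip: distrib_right)
    then show "(1 + (\<Sum>i\<in>UNIV. (u *\<^sub>R \<gamma>1 + v *\<^sub>R \<gamma>2)$i)) * L
        \<le> u * ((1 + (\<Sum>i\<in>UNIV. \<gamma>1$i)) * L) + v * ((1 + (\<Sum>i\<in>UNIV. \<gamma>2$i)) * L)"
      by (simp add: sum.distrib algebra_simps flip: sum_distrib_left)
  qed
  show "l1_lipschitz F_upper"
    unfolding l1_lipschitz_def F_upper_def
  proof (intro ballI allI)
    fix x s and \<gamma>1 \<gamma>2 :: "real^'i" assume x: "x \<in> Xset"
    have "\<bar>(1 + (\<Sum>i\<in>UNIV. \<gamma>1$i)) * L - (1 + (\<Sum>i\<in>UNIV. \<gamma>2$i)) * L\<bar> = \<bar>\<Sum>i\<in>UNIV. \<gamma>1$i - \<gamma>2$i\<bar> * L"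
      using sup_abs_le_L(3)[OF x] by (simp add: sum_subtractf abs_mult left_diff_distrib[symmetric])
    also have "\<dots> \<le> L * (\<Sum>i\<in>UNIV. \<bar>\<gamma>1$i - \<gamma>2$i\<bar>)"
      using sup_abs_le_L(3)[OF x] by (simp add: mult.commute mult_left_mono sum_abs)
    finally show "\<bar>(1 + (\<Sum>i\<in>UNIV. \<gamma>1$i)) * L - (1 + (\<Sum>i\<in>UNIV. \<gamma>2$i)) * L\<bar>
        \<le> L * (\<Sum>i\<in>UNIV. \<bar>\<gamma>1$i - \<gamma>2$i\<bar>)" .
  qed
  show "dominates_plan_values F_upper"
    unfolding dominates_plan_values_def using abs_plan_value_le_F_upper by fastforce
  show "le_F_upper F_upper"
    by (simp add: le_F_upper_def)
qed

section \<open>Value iteration from the upper bound\<close>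

definition F_iter :: "nat \<Rightarrow> real^'i \<Rightarrow> 'x \<Rightarrow> 's \<Rightarrow> real" where
  "F_iter n = (B ^^ n) F_upper"

lemma F_iter_Suc: "F_iter (Suc n) = B (F_iter n)"
  by (simp add: F_iter_def)

lemma N_pointwise_F_iter: "N_pointwise (F_iter n)"
  by (induction n) (simp_all add: F_iter_def N_pointwise_F_upper N_pointwise_bellman)

lemma F_iter_Suc_le: "x \<in> Xset \<Longrightarrow> \<gamma> \<in> nonneg_orth \<Longrightarrow> F_iter (Suc n) \<gamma> x s \<le> F_iter n \<gamma> x s"
proof (induction n arbitrary: x \<gamma> s)
  case 0
  then show ?case
    using N_pointwiseD(4)[OF N_pointwise_F_iter[of 1]] by (simp add: le_F_upper_def F_iter_def)
next
  case (Suc n)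
  from bellman_mono[OF N_pointwiseD(3)[OF N_pointwise_F_iter] Suc.IH Suc.prems]
  show ?case by (simp only: F_iter_Suc[symmetric])
qed

lemma bdd_below_F_iter:
  assumes "x \<in> Xset" "\<gamma> \<in> nonneg_orth"
  shows "bdd_below (range (\<lambda>n. F_iter n \<gamma> x s))"
proof -
  obtain a where "feasible_plan x s a" using feasible_exists[OF assms(1)] by blast
  then have "plan_value x s a \<gamma> \<le> F_iter n \<gamma> x s" for n
    using N_pointwiseD(3)[OF N_pointwise_F_iter[of n]] assms unfolding dominates_plan_values_def by blast
  then show ?thesis by (intro bdd_belowI2)
qed

definition F_star :: "real^'i \<Rightarrow> 'x \<Rightarrow> 's \<Rightarrow> real" where
  "F_star \<gamma> x s = (INF n. F_iter n \<gamma> x s)"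

lemma F_iter_tendsto_F_star:
  "x \<in> Xset \<Longrightarrow> \<gamma> \<in> nonneg_orth \<Longrightarrow> (\<lambda>n. F_iter n \<gamma> x s) \<longlonglongrightarrow> F_star \<gamma> x s"
  unfolding F_star_def by (intro LIMSEQ_decseq_INF bdd_below_F_iter decseq_SucI F_iter_Suc_le)

lemma F_star_le_F_iter: "x \<in> Xset \<Longrightarrow> \<gamma> \<in> nonneg_orth \<Longrightarrow> F_star \<gamma> x s \<le> F_iter n \<gamma> x s"
  unfolding F_star_def by (rule cINF_lower[OF bdd_below_F_iter]) auto

lemma le_F_star: "(\<And>n. c \<le> F_iter n \<gamma> x s) \<Longrightarrow> c \<le> F_star \<gamma> x s"
  unfolding F_star_def by (rule cINF_greatest) auto

lemma l1_lipschitz_F_star: "l1_lipschitz F_star"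
  unfolding l1_lipschitz_def
proof (intro ballI allI)
  fix x s and \<gamma>1 \<gamma>2 :: "real^'i"
  assume x: "x \<in> Xset" and \<gamma>: "\<gamma>1 \<in> nonneg_orth" "\<gamma>2 \<in> nonneg_orth"
  have "(\<lambda>n. \<bar>F_iter n \<gamma>1 x s - F_iter n \<gamma>2 x s\<bar>) \<longlonglongrightarrow> \<bar>F_star \<gamma>1 x s - F_star \<gamma>2 x s\<bar>"
    by (intro tendsto_rabs tendsto_diff F_iter_tendsto_F_star x \<gamma>)
  then show "\<bar>F_star \<gamma>1 x s - F_star \<gamma>2 x s\<bar> \<le> L * (\<Sum>i\<in>UNIV. \<bar>\<gamma>1$i - \<gamma>2$i\<bar>)"
    using N_pointwiseD(2)[OF N_pointwise_F_iter] x \<gamma>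
    by (intro tendsto_upperbound always_eventually) (auto simp: l1_lipschitz_def)
qed

lemma convex_in_multipliers_F_star: "convex_in_multipliers F_star"
  unfolding convex_in_multipliers_def convex_on_def
proof (intro ballI allI impI conjI convex_nonneg_orth)
  fix x s and \<gamma>1 \<gamma>2 :: "real^'i" and u v :: real
  assume x: "x \<in> Xset" and \<gamma>: "\<gamma>1 \<in> nonneg_orth" "\<gamma>2 \<in> nonneg_orth"
    and u: "0 \<le> u" and v: "0 \<le> v" and uv: "u + v = 1"
  have "(\<lambda>n. u * F_iter n \<gamma>1 x s + v * F_iter n \<gamma>2 x s) \<longlonglongrightarrow> u * F_star \<gamma>1 x s + v * F_star \<gamma>2 x s"
    by (intro tendsto_add tendsto_mult_left F_iter_tendsto_F_star x \<gamma>)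
  moreover have "F_star (u *\<^sub>R \<gamma>1 + v *\<^sub>R \<gamma>2) x s \<le> u * F_iter n \<gamma>1 x s + v * F_iter n \<gamma>2 x s" for n
  proof -
    have "F_star (u *\<^sub>R \<gamma>1 + v *\<^sub>R \<gamma>2) x s \<le> F_iter n (u *\<^sub>R \<gamma>1 + v *\<^sub>R \<gamma>2) x s"
      by (rule F_star_le_F_iter[OF x convexD[OF convex_nonneg_orth \<gamma> u v uv]])
    also have "\<dots> \<le> u * F_iter n \<gamma>1 x s + v * F_iter n \<gamma>2 x s"
      using N_pointwiseD(1)[OF N_pointwise_F_iter[of n]] x \<gamma> u v uv
      unfolding convex_in_multipliers_def convex_on_def by blast
    finally show ?thesis .
  qed
  ultimately show "F_star (u *\<^sub>R \<gamma>1 + v *\<^sub>R \<gamma>2) x s \<le> u * F_star \<gamma>1 x s + v * F_star \<gamma>2 x s"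
    by (intro tendsto_lowerbound always_eventually) auto
qed

lemma N_pointwise_F_star: "N_pointwise F_star"
  unfolding N_pointwise_def
proof (intro conjI l1_lipschitz_F_star convex_in_multipliers_F_star)
  show "dominates_plan_values F_star"
    using N_pointwiseD(3)[OF N_pointwise_F_iter] unfolding dominates_plan_values_def
    by (blast intro: le_F_star)
  show "le_F_upper F_star"
    using F_star_le_F_iter[of _ _ _ 0] by (simp add: le_F_upper_def F_iter_def)
qed

lemma max_lagrangian_F_iter_tendsto:
  assumes x: "x \<in> Xset" and \<gamma>: "\<gamma> \<in> nonneg_orth" and \<mu>: "\<mu> \<in> nonneg_orth"
  shows "(\<lambda>n. max_lagrangian (F_iter n) \<gamma> x s \<mu>) \<longlonglongrightarrow> max_lagrangian F_star \<gamma> x s \<mu>"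
  unfolding max_lagrangian_def
proof (intro tendsto_Sup finite_actions)
  fix a assume "a \<in> actions x s"
  then have "\<zeta> x a s \<in> Xset" using \<zeta>_X[OF x] by (simp add: actions_def)
  then show "(\<lambda>n. lagrangian (F_iter n) \<gamma> x s \<mu> a) \<longlonglongrightarrow> lagrangian F_star \<gamma> x s \<mu> a"
    unfolding lagrangian_def
    by (intro tendsto_intros F_iter_tendsto_F_star nonneg_orth_add[OF \<gamma> \<mu>])
qed

lemma bellman_F_star:
  assumes x: "x \<in> Xset" and \<gamma>: "\<gamma> \<in> nonneg_orth"
  shows "B F_star \<gamma> x s = F_star \<gamma> x s"
proof (rule antisym)
  have "B F_star \<gamma> x s \<le> F_iter (Suc n) \<gamma> x s" for n
    unfolding F_iter_Suc
    by (rule bellman_mono[OF N_pointwiseD(3)[OF N_pointwise_F_star] F_star_le_F_iter x \<gamma>])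
  then have "B F_star \<gamma> x s \<le> F_iter n \<gamma> x s" for n
    using F_iter_Suc_le[OF x \<gamma>, of 0 s] by (cases n) (auto intro: order_trans)
  then show "B F_star \<gamma> x s \<le> F_star \<gamma> x s"
    by (rule le_F_star)
  show "F_star \<gamma> x s \<le> B F_star \<gamma> x s"
    unfolding bellman_eq_INF_max_lagrangian
  proof (rule cINF_greatest)
    fix \<mu> :: "real^'i" assume \<mu>: "\<mu> \<in> nonneg_orth"
    have "F_star \<gamma> x s \<le> max_lagrangian (F_iter n) \<gamma> x s \<mu>" for n
      using F_star_le_F_iter[OF x \<gamma>, of s "Suc n"]
        bellman_le_max_lagrangian[OF N_pointwiseD(3)[OF N_pointwise_F_iter] x \<gamma> \<mu>, of n s]
      by (simp add: F_iter_Suc)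
    then show "F_star \<gamma> x s \<le> max_lagrangian F_star \<gamma> x s \<mu>"
      by (intro tendsto_lowerbound[OF max_lagrangian_F_iter_tendsto[OF x \<gamma> \<mu>]] always_eventually) auto
  qed (use zero_in_nonneg_orth in blast)
qed

lemma fixed_point_le_F_star:
  assumes LB: "dominates_plan_values G" and UB: "le_F_upper G"
    and fixed: "\<And>x \<gamma> s. x \<in> Xset \<Longrightarrow> \<gamma> \<in> nonneg_orth \<Longrightarrow> B G \<gamma> x s = G \<gamma> x s"
    and x: "x \<in> Xset" and \<gamma>: "\<gamma> \<in> nonneg_orth"
  shows "G \<gamma> x s \<le> F_star \<gamma> x s"
proof (rule le_F_star)
  show "G \<gamma> x s \<le> F_iter n \<gamma> x s" for n
    using x \<gamma>
  proof (induction n arbitrary: x \<gamma> s)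
    case 0
    then show ?case using UB by (simp add: le_F_upper_def F_iter_def)
  next
    case (Suc n)
    have "G \<gamma> x s = B G \<gamma> x s" using fixed Suc.prems by simp
    also have "\<dots> \<le> F_iter (Suc n) \<gamma> x s"
      unfolding F_iter_Suc by (rule bellman_mono[OF LB Suc.IH Suc.prems])
    finally show ?case .
  qed
qed

section \<open>Membership in M and convergence in its norm\<close>

lemma N_pointwise_abs_le:
  assumes F: "N_pointwise F" and x: "x \<in> Xset" and \<gamma>: "\<gamma> \<in> nonneg_orth"
  shows "\<bar>F \<gamma> x s\<bar> \<le> F_upper \<gamma> x s"
proof -
  obtain a where a: "feasible_plan x s a" using feasible_exists[OF x] by blast
  have "plan_value x s a \<gamma> \<le> F \<gamma> x s" "F \<gamma> x s \<le> F_upper \<gamma> x s"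
    using N_pointwiseD(3,4)[OF F] x \<gamma> a unfolding dominates_plan_values_def le_F_upper_def by blast+
  then show ?thesis using abs_plan_value_le_F_upper[OF a x \<gamma>] by linarith
qed

lemma N_pointwise_abs_le_on_boxB:
  assumes F: "N_pointwise F" and x: "x \<in> Xset" and \<gamma>: "\<gamma> \<in> boxB k"
  shows "\<bar>F \<gamma> x s\<bar> \<le> (1 + real CARD('i) * real k) * \<bar>L\<bar>"
proof -
  have "\<bar>F \<gamma> x s\<bar> \<le> (1 + (\<Sum>i\<in>UNIV. \<gamma>$i)) * L"
    using N_pointwise_abs_le[OF F x] \<gamma> boxB_subset_nonneg_orth unfolding F_upper_def by blast
  also have "\<dots> \<le> (1 + real CARD('i) * real k) * L"
    using sum_le_of_mem_boxB[OF \<gamma>] sup_abs_le_L(3)[OF x] by (intro mult_right_mono) auto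
  also have "\<dots> = (1 + real CARD('i) * real k) * \<bar>L\<bar>"
    using sup_abs_le_L(3)[OF x] by simp
  finally show ?thesis .
qed

lemma N_pointwise_lipschitz:
  assumes F: "N_pointwise F" and x: "x \<in> Xset"
  shows "(L * real CARD('i))-lipschitz_on nonneg_orth (\<lambda>\<gamma>. F \<gamma> x s)"
proof (rule lipschitz_onI)
  fix \<gamma>1 \<gamma>2 :: "real^'i" assume "\<gamma>1 \<in> nonneg_orth" "\<gamma>2 \<in> nonneg_orth"
  then have "\<bar>F \<gamma>1 x s - F \<gamma>2 x s\<bar> \<le> L * (\<Sum>i\<in>UNIV. \<bar>\<gamma>1$i - \<gamma>2$i\<bar>)"
    using N_pointwiseD(2)[OF F] x unfolding l1_lipschitz_def by blast
  also have "\<dots> \<le> L * (real CARD('i) * dist \<gamma>1 \<gamma>2)"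
    using sum_abs_diff_le_card_dist sup_abs_le_L(3)[OF x] by (intro mult_left_mono) auto
  finally show "dist (F \<gamma>1 x s) (F \<gamma>2 x s) \<le> L * real CARD('i) * dist \<gamma>1 \<gamma>2"
    by (simp add: dist_real_def mult.assoc)
qed (use sup_abs_le_L(3)[OF x] in simp)

lemma N_pointwise_measurable_on_boxB:
  assumes "N_pointwise F" "x \<in> Xset"
  shows "(\<lambda>\<gamma>. F \<gamma> x s) \<in> borel_measurable (lebesgue_on (boxB k))"
  using lipschitz_on_continuous_on[OF N_pointwise_lipschitz[OF assms]] boxB_subset_nonneg_orth
  by (intro continuous_imp_measurable_on_sets_lebesgue boxB_in_sets_lebesgue)
     (rule continuous_on_subset)

lemma in_M_if_N_pointwise:
  assumes F: "N_pointwise F" and xe: "\<And>j. j \<in> Jx \<Longrightarrow> xe j \<in> Xset"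
  shows "in_M se xe Jx Xset F"
  unfolding in_M_def
proof (intro conjI ballI allI impI)
  fix x s and k :: nat assume "x \<in> Xset"
  then show "in_Linf k (\<lambda>\<gamma>. F \<gamma> x s)"
    by (intro in_Linf_if_bounded[where c="(1 + real CARD('i) * real k) * \<bar>L\<bar>"]
        N_pointwise_measurable_on_boxB N_pointwise_abs_le_on_boxB F)
next
  show "normM se xe Jx F < \<infinity>"
  \<comment> \<open>\<bar>L\<bar> rather than L: for empty Xset, L is a junk SUP over the empty set.\<close>
  proof (rule normM_less_top)
    show "Linf_norm (Suc k) (\<lambda>\<gamma>. F \<gamma> (xe j) (se i)) \<le> ereal ((1 + real CARD('i) * real (Suc k)) * \<bar>L\<bar>)"
      if "j \<in> Jx" for i j k
      by (intro Linf_norm_le N_pointwise_measurable_on_boxB N_pointwise_abs_le_on_boxB F xe that)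
    show "summable (\<lambda>k. (1/2)^Suc k * ((1 + real CARD('i) * real (Suc k)) * \<bar>L\<bar>))"
      using summable_mult2[OF summable_half_power_times_linear, of "real CARD('i)" "\<bar>L\<bar>"]
      by (simp add: mult_ac)
  qed simp
qed

lemma normM_F_iter_minus_F_star_tendsto_0:
  assumes xe: "\<And>j. j \<in> Jx \<Longrightarrow> xe j \<in> Xset"
  shows "(\<lambda>n. normM se xe Jx (\<lambda>\<gamma> x s. F_iter n \<gamma> x s - F_star \<gamma> x s)) \<longlonglongrightarrow> 0"
proof (rule normM_tendsto_0)
  fix n i j k assume j: "j \<in> Jx"
  have meas: "(\<lambda>\<gamma>. F_iter n \<gamma> (xe j) (se i) - F_star \<gamma> (xe j) (se i))
      \<in> borel_measurable (lebesgue_on (boxB (Suc k)))" for n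
    using xe[OF j] by (intro borel_measurable_diff N_pointwise_measurable_on_boxB N_pointwise_F_iter N_pointwise_F_star)
  have "\<bar>F_iter n \<gamma> (xe j) (se i) - F_star \<gamma> (xe j) (se i)\<bar> \<le> 2 * ((1 + real CARD('i) * real (Suc k)) * \<bar>L\<bar>)"
    if "\<gamma> \<in> boxB (Suc k)" for \<gamma>
    using N_pointwise_abs_le_on_boxB[OF N_pointwise_F_iter xe[OF j] that, of n "se i"]
      N_pointwise_abs_le_on_boxB[OF N_pointwise_F_star xe[OF j] that, of "se i"]
    by linarith
  then show "Linf_norm (Suc k) (\<lambda>\<gamma>. F_iter n \<gamma> (xe j) (se i) - F_star \<gamma> (xe j) (se i))
      \<le> ereal (2 * ((1 + real CARD('i) * real (Suc k)) * \<bar>L\<bar>))"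
    by (rule Linf_norm_le[OF meas])
  have "uniform_limit (boxB (Suc k))
      (\<lambda>n \<gamma>. F_iter n \<gamma> (xe j) (se i)) (\<lambda>\<gamma>. F_star \<gamma> (xe j) (se i)) sequentially"
  proof (rule uniform_limit_equi_lipschitz_compact[OF compact_boxB])
    show "(L * real CARD('i))-lipschitz_on (boxB (Suc k)) (\<lambda>\<gamma>. F_iter n \<gamma> (xe j) (se i))" for n
      by (rule lipschitz_on_subset[OF N_pointwise_lipschitz[OF N_pointwise_F_iter xe[OF j]] boxB_subset_nonneg_orth])
    show "(L * real CARD('i))-lipschitz_on (boxB (Suc k)) (\<lambda>\<gamma>. F_star \<gamma> (xe j) (se i))"
      by (rule lipschitz_on_subset[OF N_pointwise_lipschitz[OF N_pointwise_F_star xe[OF j]] boxB_subset_nonneg_orth])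
    show "(\<lambda>n. F_iter n \<gamma> (xe j) (se i)) \<longlonglongrightarrow> F_star \<gamma> (xe j) (se i)" if "\<gamma> \<in> boxB (Suc k)" for \<gamma>
      using that boxB_subset_nonneg_orth by (intro F_iter_tendsto_F_star xe[OF j]) auto
  qed
  then show "(\<lambda>n. e2ennreal (Linf_norm (Suc k)
      (\<lambda>\<gamma>. F_iter n \<gamma> (xe j) (se i) - F_star \<gamma> (xe j) (se i)))) \<longlonglongrightarrow> 0"
    by (rule Linf_norm_diff_tendsto_0[OF meas])
next
  show "summable (\<lambda>k. (1/2)^Suc k * (2 * ((1 + real CARD('i) * real (Suc k)) * \<bar>L\<bar>)))"
    using summable_mult2[OF summable_half_power_times_linear, of "real CARD('i)" "2 * \<bar>L\<bar>"]
    by (simp add: mult_ac)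
qed simp

end

theorem theorem3p6:
  fixes P :: "'s::finite \<Rightarrow> 's \<Rightarrow> real"
    and Aset :: "(real^'n) set"
    and Xset :: "(real^'m) set"
    and \<zeta> :: "real^'m \<Rightarrow> real^'n \<Rightarrow> 's \<Rightarrow> real^'m"
    and p r :: "real^'m \<Rightarrow> real^'n \<Rightarrow> 's \<Rightarrow> real"
    and g :: "'i::finite \<Rightarrow> real^'m \<Rightarrow> real^'n \<Rightarrow> 's \<Rightarrow> real"
    and gbar :: "'i \<Rightarrow> real"
    and \<beta> :: real
    and se :: "nat \<Rightarrow> 's"
    and xe :: "nat \<Rightarrow> real^'m"
    and Jx :: "nat set"
    and F0 :: "real^'i \<Rightarrow> real^'m \<Rightarrow> 's \<Rightarrow> real"
  assumes P_pos: "\<And>s s'. 0 < P s s'"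
    and P_sum: "\<And>s. (\<Sum>s'\<in>UNIV. P s s') = 1"
    and A_fin: "finite Aset"
    and X_count: "countable Xset"
    and \<zeta>_X: "\<And>x a s. x \<in> Xset \<Longrightarrow> a \<in> Aset \<Longrightarrow> \<zeta> x a s \<in> Xset"
    and r_bdd: "bounded ((\<lambda>(x,a,s). r x a s) ` (Xset \<times> Aset \<times> UNIV))"
    and g_bdd: "\<And>i. bounded ((\<lambda>(x,a,s). g i x a s) ` (Xset \<times> Aset \<times> UNIV))"
    and \<beta>: "0 < \<beta>" "\<beta> < 1"
    and se_enum: "bij_betw se {1..CARD('s)} UNIV"
    and xe_enum: "bij_betw xe Jx Xset"
    and Jx_form: "Jx = {1..} \<or> (\<exists>k. Jx = {1..k})"
    and feasible_exists: "\<And>x0 s0. x0 \<in> Xset \<Longrightarrow> \<exists>a. feasible P \<beta> \<zeta> Aset p g gbar x0 s0 a"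
    and F0_def: "F0 = (\<lambda>\<gamma> x s. (1 + (\<Sum>i\<in>UNIV. \<gamma>$i)) * Lconst Xset Aset \<beta> r g)"
  shows "\<exists>Fs. in_N se xe Jx Xset P \<beta> \<zeta> Aset p r g gbar Fs
           \<and> (\<lambda>n. normM se xe Jx (\<lambda>\<gamma> x s. ((bellman P \<beta> \<zeta> Aset p r g gbar ^^ n) F0) \<gamma> x s - Fs \<gamma> x s))
               \<longlonglongrightarrow> 0
           \<and> (\<forall>\<gamma>\<in>nonneg_orth. \<forall>x\<in>Xset. \<forall>s. bellman P \<beta> \<zeta> Aset p r g gbar Fs \<gamma> x s = Fs \<gamma> x s)
           \<and> (\<forall>F. in_N se xe Jx Xset P \<beta> \<zeta> Aset p r g gbar F
                  \<and> (\<forall>\<gamma>\<in>nonneg_orth. \<forall>x\<in>Xset. \<forall>s. bellman P \<beta> \<zeta> Aset p r g gbar F \<gamma> x s = F \<gamma> x s)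
                  \<longrightarrow> (\<forall>\<gamma>\<in>nonneg_orth. \<forall>x\<in>Xset. \<forall>s. F \<gamma> x s \<le> Fs \<gamma> x s))"
proof -
  have "stochastic_matrix P"
    using P_pos P_sum by (simp add: stochastic_matrix_def less_imp_le)
  then interpret constrained_mdp P \<beta> \<zeta> Aset Xset p r g gbar
    using A_fin \<zeta>_X r_bdd g_bdd \<beta> feasible_exists by unfold_locales auto
  have xe: "xe j \<in> Xset" if "j \<in> Jx" for j
    using xe_enum that by (auto simp: bij_betw_def)
  have "F0 = F_upper"
    by (intro ext) (simp add: F0_def F_upper_def L_def)
  then have iterates: "(bellman P \<beta> \<zeta> Aset p r g gbar ^^ n) F0 = F_iter n" for n
    by (simp add: F_iter_def)
  show ?thesis
    unfolding iterates in_N_iff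
    using in_M_if_N_pointwise[OF N_pointwise_F_star xe] N_pointwise_F_star
      normM_F_iter_minus_F_star_tendsto_0[OF xe] bellman_F_star
      fixed_point_le_F_star[OF N_pointwiseD(3,4)]
    by (intro exI[of _ F_star]) auto
qed

end
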